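(* Let $\mathcal H$ and $\mathcal G$ be real Hilbert spaces, let $A\colon\mathcal H\to 2^{\mathcal H}$ and $B\colon\mathcal G\to 2^{\mathcal G}$ be maximally monotone, and let $L\colon\mathcal H\to\mathcal G$ be a bounded linear operator. Consider the primal problem: find $x\in\mathcal H$ with $0\in Ax+L^*BLx$, and the dual problem: find $v\in\mathcal G$ with $0\in -LA^{-1}(-L^*v)+B^{-1}v$. Set $R=(\mathrm{Id}+LL^* )^{-1}$, $Q=(\mathrm{Id}+L^*L)^{-1}$, and assume $\operatorname{zer}(A+L^*BL)\neq\varnothing$. Let $(\lambda_n)$ be a sequence in $\left]0,2\right[$, $(a_n)$ a sequence in $\mathcal H$, $(b_n)$ a sequence in $\mathcal G$, with $\sum_n\lambda_n(2-\lambda_n)=+\infty$ and $\sum_n\lambda_n\sqrt{\|a_n\|^2+\|b_n\|^2}<+\infty$. Let $x_0\in\mathcal H$, $v_0\in\mathcal G$, set $y_0=Lx_0$, $u_0=-L^*v_0$, and for every $n$: $p_n=J_A(x_n+u_n)+a_n$, $q_n=J_B(y_n+v_n)+b_n$, $r_n=x_n+u_n-p_n$, $s_n=y_n+v_n-q_n$, $t_n=R(Lr_n-s_n)$, $w_n=R(Lp_n-q_n)$, $x_{n+1}=x_n+\lambda_n(L^*t_n-r_n)$, $y_{n+1}=y_n-\lambda_n(t_n+s_n)$, $u_{n+1}=u_n-\lambda_nL^*w_n$, $v_{n+1}=v_n+\lambda_nw_n$. Then, writing $\widetilde t_n=Q(r_n+L^*s_n)$ and $\widetilde w_n=Q(p_n+L^*q_n)$: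 (i) $x_n-\widetilde w_n+Q(a_n+L^*b_n)\to0$ and $y_n-L\widetilde w_n+LQ(a_n+L^*b_n)\to0$; (ii) $u_n-r_n+\widetilde t_n-a_n+Q(a_n+L^*b_n)\to0$ and $v_n-s_n+L\widetilde t_n-b_n+LQ(a_n+L^*b_n)\to0$. Moreover, there exist a solution $\overline x$ of the primal problem and a solution $\overline v$ of the dual problem such that (iii) $-L^*\overline v\in A\overline x$ and $\overline v\in BL\overline x$; (iv) $x_n\rightharpoonup\overline x$ and $v_n\rightharpoonup\overline v$.
   Context: $J_A=(\mathrm{Id}+A)^{-1}$ is the resolvent; $A^{-1}$ is the set-valued inverse; $\operatorname{zer}$ is the zero set; $\to$ is strong and $\rightharpoonup$ weak convergence. *)

theory Defs
  imports "HOL-Analysis.Analysis"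
begin

definition monotone_op :: "('a::real_inner \<Rightarrow> 'a set) \<Rightarrow> bool" where
  "monotone_op A \<longleftrightarrow> (\<forall>x y u v. u \<in> A x \<longrightarrow> v \<in> A y \<longrightarrow> inner (x - y) (u - v) \<ge> 0)"

definition maximal_monotone :: "('a::real_inner \<Rightarrow> 'a set) \<Rightarrow> bool" where
  "maximal_monotone A \<longleftrightarrow> monotone_op A \<and>
     (\<forall>x u. (\<forall>y v. v \<in> A y \<longrightarrow> inner (x - y) (u - v) \<ge> 0) \<longrightarrow> u \<in> A x)"

text \<open>Resolvent J_A = (Id + A)^{-1}, single-valued for maximally monotone A.\<close>
definition resolvent :: "('a::real_inner \<Rightarrow> 'a set) \<Rightarrow> 'a \<Rightarrow> 'a" where
  "resolvent A x = (THE p. x - p \<in> A p)"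

definition inv_id_plus :: "('a::real_vector \<Rightarrow> 'a) \<Rightarrow> 'a \<Rightarrow> 'a" where
  "inv_id_plus T y = (THE z. z + T z = y)"

definition set_inv :: "('a \<Rightarrow> 'b set) \<Rightarrow> 'b \<Rightarrow> 'a set" where
  "set_inv A u = {x. u \<in> A x}"

definition op_add :: "('a \<Rightarrow> 'b::plus set) \<Rightarrow> ('a \<Rightarrow> 'b set) \<Rightarrow> 'a \<Rightarrow> 'b set" where
  "op_add A C x = {a + c | a c. a \<in> A x \<and> c \<in> C x}"

definition zer :: "('a \<Rightarrow> 'b::zero set) \<Rightarrow> 'a set" where
  "zer T = {x. 0 \<in> T x}"

definition weak_conv :: "(nat \<Rightarrow> 'a::real_inner) \<Rightarrow> 'a \<Rightarrow> bool" (infix "\<rightharpoonup>" 50) where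
  "xs \<rightharpoonup> x \<longleftrightarrow> (\<forall>z. (\<lambda>n. inner (xs n) z) \<longlonglongrightarrow> inner x z)"

end

theory Submission
  imports Defs "HOL-Library.Diagonal_Subsequence"
begin

text \<open>In \<open>\<H> \<times> \<G>\<close> let \<open>V\<close> be the graph of \<open>L\<close>, so that \<open>V\<^sup>\<bottom> = {(-L\<^sup>*v, v)}\<close>, and let
  \<open>J\<close> be the resolvent of \<open>A \<times> B\<close>. The iteration keeps \<open>(x\<^sub>n, y\<^sub>n) \<in> V\<close> and \<open>(u\<^sub>n, v\<^sub>n) \<in> V\<^sup>\<bottom>\<close>, so
  \<open>z\<^sub>n = (x\<^sub>n + u\<^sub>n, y\<^sub>n + v\<^sub>n)\<close> has these two vectors as its orthogonal components, and \<open>z\<^sub>n\<close> follows the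
  relaxed Douglas--Rachford iteration \<open>z\<^sub>n\<^sub>+\<^sub>1 = z\<^sub>n + \<lambda>\<^sub>n/2 (N z\<^sub>n - z\<^sub>n) + \<lambda>\<^sub>n R\<^sub>V(a\<^sub>n, b\<^sub>n)\<close> for the
  nonexpansive map \<open>N = R\<^sub>V (2J - Id)\<close>, \<open>R\<^sub>V = 2P\<^sub>V - Id\<close>, with summable errors. A fixed point
  \<open>f\<close> of \<open>N\<close> satisfies \<open>P\<^sub>V f = J f\<close>, which says exactly that \<open>x = fst (P\<^sub>V f)\<close> and
  \<open>v = snd (f - P\<^sub>V f)\<close> solve \<open>-L\<^sup>*v \<in> A x\<close>, \<open>v \<in> B (L x)\<close>; such an \<open>f\<close> exists because the primal
  problem is solvable. The Krasnosel'skii--Mann theorem with errors gives \<open>N z\<^sub>n - z\<^sub>n \<rightarrow> 0\<close> and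
  \<open>z\<^sub>n \<rightharpoonup> f\<close>. Projecting onto \<open>V\<close> and \<open>V\<^sup>\<bottom>\<close> turns the first fact into (i) and (ii), since
  \<open>P\<^sub>V(J z\<^sub>n - z\<^sub>n)\<close> and \<open>J z\<^sub>n - P\<^sub>V J z\<^sub>n\<close> are orthogonal with difference \<open>(N z\<^sub>n - z\<^sub>n)/2\<close>, and the
  second into (iii) and (iv).\<close>

section \<open>Minimization, Riesz representation and weak compactness\<close>

lemma inner_self_nonpos_imp_zero:
  fixes x :: "'a::real_inner"
  assumes "inner x x \<le> 0"
  shows "x = 0"
  using assms inner_gt_zero_iff not_le by blast

lemma norm_midpoint_sq:
  fixes a b :: "'a::real_inner"
  shows "(norm ((1/2) *\<^sub>R (a + b)))\<^sup>2 = ((norm a)\<^sup>2 + (norm b)\<^sup>2)/2 - (norm (a - b))\<^sup>2/4"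
  by (simp add: power2_norm_eq_inner inner_add_left inner_add_right inner_diff_left
      inner_diff_right inner_commute algebra_simps) (simp add: field_simps)

lemma norm_convex_combination_sq:
  fixes a b :: "'a::real_inner"
  shows "(norm ((1 - m) *\<^sub>R a + m *\<^sub>R b))\<^sup>2
    = (1 - m) * (norm a)\<^sup>2 + m * (norm b)\<^sup>2 - m * (1 - m) * (norm (a - b))\<^sup>2"
  unfolding power2_norm_eq_inner
  by (simp add: inner_add_left inner_add_right inner_diff_left inner_diff_right inner_commute
      algebra_simps)

lemma norm_add_scaleR_sq:
  fixes z m :: "'a::real_inner"
  shows "(norm (z + t *\<^sub>R m))\<^sup>2 = (norm z)\<^sup>2 + 2 * t * inner z m + t\<^sup>2 * (norm m)\<^sup>2"
  unfolding power2_norm_eq_inner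
  by (simp add: inner_add_left inner_add_right inner_commute power2_eq_square algebra_simps)

lemma nonneg_quadratic_imp_linear_coeff_zero:
  fixes a b :: real
  assumes "b \<ge> 0" and "\<And>t. 0 \<le> t * a + t\<^sup>2 * b"
  shows "a = 0"
proof (rule ccontr)
  assume "a \<noteq> 0"
  define t where "t = - a / (2 * b + 1)"
  have "t * a + t\<^sup>2 * b = - a\<^sup>2 * (b + 1) / (2 * b + 1)\<^sup>2"
    using assms(1) unfolding t_def by (simp add: divide_simps power2_eq_square) (simp add: algebra_simps)
  also have "\<dots> < 0"
    using \<open>a \<noteq> 0\<close> assms(1) by (simp add: divide_neg_pos mult_neg_pos)
  finally show False using assms(2)[of t] by linarith
qed

lemma le_if_le_add_small_multiple:
  fixes a b c :: real
  assumes "\<And>t. 0 < t \<Longrightarrow> t \<le> 1 \<Longrightarrow> a \<le> b + t * c"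
  shows "a \<le> b"
proof (rule field_le_epsilon)
  fix e :: real assume "0 < e"
  define t where "t = min 1 (e / (\<bar>c\<bar> + 1))"
  have t: "0 < t" "t \<le> 1" unfolding t_def using \<open>0 < e\<close> by auto
  have "t * c \<le> t * \<bar>c\<bar>" using t by (simp add: mult_left_mono)
  also have "\<dots> \<le> e / (\<bar>c\<bar> + 1) * \<bar>c\<bar>" unfolding t_def by (intro mult_right_mono) auto
  also have "\<dots> \<le> e" using \<open>0 < e\<close> by (simp add: field_simps)
  finally show "a \<le> b + e" using assms[OF t] by linarith
qed

lemma Cauchy_if_norm_diff_sq_le:
  fixes X :: "nat \<Rightarrow> 'a::real_normed_vector"
  assumes bound: "\<And>m n. (norm (X m - X n))\<^sup>2 \<le> \<delta> m + \<delta> n" and "\<delta> \<longlonglongrightarrow> 0"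
  shows "Cauchy X"
proof (rule CauchyI)
  fix e :: real assume "0 < e"
  then have "0 < e\<^sup>2 / 2" by simp
  from order_tendstoD(2)[OF \<open>\<delta> \<longlonglongrightarrow> 0\<close> this] obtain N where N: "\<And>n. N \<le> n \<Longrightarrow> \<delta> n < e\<^sup>2 / 2"
    unfolding eventually_sequentially by blast
  show "\<exists>M. \<forall>m\<ge>M. \<forall>n\<ge>M. norm (X m - X n) < e"
  proof (intro exI allI impI)
    fix m n assume "N \<le> m" "N \<le> n"
    then have "(norm (X m - X n))\<^sup>2 < e\<^sup>2" using bound[of m n] N[of m] N[of n] by linarith
    then show "norm (X m - X n) < e" using \<open>0 < e\<close> by (simp add: power2_less_imp_less)
  qed
qed

text \<open>Minimizing sequences are Cauchy by the midpoint inequality.\<close>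
lemma uniformly_convex_attains_min:
  fixes h :: "'a::{real_inner,complete_space} \<Rightarrow> real"
  assumes "D \<noteq> {}" and "bdd_below (h ` D)"
    and midpoint: "\<And>z1 z2. z1 \<in> D \<Longrightarrow> z2 \<in> D \<Longrightarrow> (1/2) *\<^sub>R (z1 + z2) \<in> D \<and>
        h ((1/2) *\<^sub>R (z1 + z2)) \<le> (h z1 + h z2)/2 - (norm (z1 - z2))\<^sup>2/8"
    and limit: "\<And>X l. (\<And>n. X n \<in> D) \<Longrightarrow> X \<longlonglongrightarrow> l \<Longrightarrow> (\<lambda>n. h (X n)) \<longlonglongrightarrow> Inf (h ` D)
        \<Longrightarrow> l \<in> D \<and> h l \<le> Inf (h ` D)"
  shows "\<exists>z\<in>D. \<forall>y\<in>D. h z \<le> h y"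
proof -
  define m where "m = Inf (h ` D)"
  have m_le: "m \<le> h z" if "z \<in> D" for z
    unfolding m_def using cInf_lower[OF _ \<open>bdd_below (h ` D)\<close>] that by blast
  have "\<exists>z. z \<in> D \<and> h z < m + inverse (real (Suc n))" for n
    using cInf_lessD[of "h ` D" "m + inverse (real (Suc n))"] \<open>D \<noteq> {}\<close> unfolding m_def by auto
  then obtain X where X: "\<And>n. X n \<in> D" "\<And>n. h (X n) < m + inverse (real (Suc n))"
    by metis
  have inv0: "(\<lambda>n. inverse (real (Suc n))) \<longlonglongrightarrow> 0"
    using LIMSEQ_inverse_real_of_nat by simp
  have hX: "(\<lambda>n. h (X n)) \<longlonglongrightarrow> m"
  proof (rule tendsto_sandwich[of "\<lambda>n. m" _ _ "\<lambda>n. m + inverse (real (Suc n))"])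
    show "(\<lambda>n. m + inverse (real (Suc n))) \<longlonglongrightarrow> m"
      using tendsto_add[OF tendsto_const inv0, of m] by simp
    show "\<forall>\<^sub>F n in sequentially. h (X n) \<le> m + inverse (real (Suc n))"
      using X(2) less_imp_le by (intro always_eventually) blast
  qed (use m_le X in auto)
  have "(norm (X n - X k))\<^sup>2 \<le> 4 * inverse (real (Suc n)) + 4 * inverse (real (Suc k))" for n k
  proof -
    have "m \<le> h ((1/2) *\<^sub>R (X n + X k))" using midpoint[OF X(1) X(1)] m_le by blast
    also have "\<dots> \<le> (h (X n) + h (X k))/2 - (norm (X n - X k))\<^sup>2/8" using midpoint[OF X(1) X(1)] by blast
    finally show ?thesis using X(2)[of n] X(2)[of k] by argo
  qed
  then have "Cauchy X"
    by (rule Cauchy_if_norm_diff_sq_le) (use tendsto_mult_right_zero[OF inv0, of 4] in simp)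
  then obtain l where "X \<longlonglongrightarrow> l" using Cauchy_convergent convergent_def by blast
  with limit[OF X(1)] hX m_def have "l \<in> D" "h l \<le> m" by auto
  then show ?thesis using m_le by (meson order_trans)
qed

lemma subspace_closure:
  fixes S :: "'a::real_normed_vector set"
  assumes "subspace S"
  shows "subspace (closure S)"
  unfolding subspace_def
proof (intro conjI ballI allI)
  show "0 \<in> closure S" using assms closure_subset subspace_0 by blast
next
  fix x y assume "x \<in> closure S" "y \<in> closure S"
  then obtain X Y where "\<And>n. X n \<in> S" "X \<longlonglongrightarrow> x" "\<And>n. Y n \<in> S" "Y \<longlonglongrightarrow> y"
    using closure_sequential by metis
  moreover have "\<And>n. X n + Y n \<in> S" using \<open>\<And>n. X n \<in> S\<close> \<open>\<And>n. Y n \<in> S\<close> assms subspace_add by blast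
  moreover have "(\<lambda>n. X n + Y n) \<longlonglongrightarrow> x + y"
    using \<open>X \<longlonglongrightarrow> x\<close> \<open>Y \<longlonglongrightarrow> y\<close> by (rule tendsto_add)
  ultimately show "x + y \<in> closure S" using closure_sequential by metis
next
  fix c x assume "x \<in> closure S"
  then obtain X where "\<And>n. X n \<in> S" "X \<longlonglongrightarrow> x" using closure_sequential by metis
  moreover have "\<And>n. c *\<^sub>R X n \<in> S" using \<open>\<And>n. X n \<in> S\<close> assms subspace_scale by blast
  moreover have "(\<lambda>n. c *\<^sub>R X n) \<longlonglongrightarrow> c *\<^sub>R x"
    using \<open>X \<longlonglongrightarrow> x\<close> by (intro tendsto_intros)
  ultimately show "c *\<^sub>R x \<in> closure S" using closure_sequential by metis
qed

lemma bounded_linear_on_tendsto: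
  fixes \<phi> :: "'a::real_normed_vector \<Rightarrow> real"
  assumes "subspace M"
    and add: "\<And>x y. x \<in> M \<Longrightarrow> y \<in> M \<Longrightarrow> \<phi> (x + y) = \<phi> x + \<phi> y"
    and scale: "\<And>c x. x \<in> M \<Longrightarrow> \<phi> (c *\<^sub>R x) = c * \<phi> x"
    and bounded: "\<And>x. x \<in> M \<Longrightarrow> \<bar>\<phi> x\<bar> \<le> C * norm x"
    and X: "\<And>n. X n \<in> M" "X \<longlonglongrightarrow> l" and "l \<in> M"
  shows "(\<lambda>n. \<phi> (X n)) \<longlonglongrightarrow> \<phi> l"
proof -
  have "\<phi> (X n - l) = \<phi> (X n) - \<phi> l" for n
    using add[OF X(1) subspace_scale[OF \<open>subspace M\<close> \<open>l \<in> M\<close>, where c = "-1"]]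
      scale[OF \<open>l \<in> M\<close>, of "-1"] by simp
  then have "\<forall>\<^sub>F n in sequentially. norm (\<phi> (X n) - \<phi> l) \<le> C * norm (X n - l)"
    using bounded[OF subspace_diff[OF \<open>subspace M\<close> X(1) \<open>l \<in> M\<close>]] by simp
  moreover have "(\<lambda>n. C * norm (X n - l)) \<longlonglongrightarrow> 0"
    using tendsto_mult_right_zero[OF tendsto_norm_zero[OF LIM_zero[OF X(2)]]] .
  ultimately have "(\<lambda>n. \<phi> (X n) - \<phi> l) \<longlonglongrightarrow> 0"
    by (rule Lim_null_comparison)
  then show ?thesis by (rule LIM_zero_cancel)
qed

lemma energy_minimizer_represents:
  fixes \<phi> :: "'a::real_inner \<Rightarrow> real"
  assumes "subspace M" "z \<in> M"
    and add: "\<And>x y. x \<in> M \<Longrightarrow> y \<in> M \<Longrightarrow> \<phi> (x + y) = \<phi> x + \<phi> y"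
    and scale: "\<And>c x. x \<in> M \<Longrightarrow> \<phi> (c *\<^sub>R x) = c * \<phi> x"
    and min: "\<And>y. y \<in> M \<Longrightarrow> (norm z)\<^sup>2/2 - \<phi> z \<le> (norm y)\<^sup>2/2 - \<phi> y"
    and "m \<in> M"
  shows "inner z m = \<phi> m"
proof -
  have "inner z m - \<phi> m = 0"
  proof (rule nonneg_quadratic_imp_linear_coeff_zero)
    show "0 \<le> (norm m)\<^sup>2/2" by simp
    fix t
    have "z + t *\<^sub>R m \<in> M" using assms(1,2,6) subspace_add subspace_scale by blast
    note min[OF this]
    moreover have "\<phi> (z + t *\<^sub>R m) = \<phi> z + t * \<phi> m"
      using assms(2,6) add scale subspace_scale[OF assms(1)] by simp
    ultimately show "0 \<le> t * (inner z m - \<phi> m) + t\<^sup>2 * ((norm m)\<^sup>2 / 2)"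
      unfolding norm_add_scaleR_sq by (simp add: algebra_simps)
  qed
  then show ?thesis by simp
qed

lemma riesz_representation_closed_subspace:
  fixes M :: "'a::{real_inner,complete_space} set" and \<phi> :: "'a \<Rightarrow> real"
  assumes "closed M" "subspace M"
    and add: "\<And>x y. x \<in> M \<Longrightarrow> y \<in> M \<Longrightarrow> \<phi> (x + y) = \<phi> x + \<phi> y"
    and scale: "\<And>c x. x \<in> M \<Longrightarrow> \<phi> (c *\<^sub>R x) = c * \<phi> x"
    and bounded: "\<And>x. x \<in> M \<Longrightarrow> \<bar>\<phi> x\<bar> \<le> C * norm x"
  shows "\<exists>z\<in>M. \<forall>m\<in>M. inner z m = \<phi> m"
proof -
  define h where "h z = (norm z)\<^sup>2/2 - \<phi> z" for z
  have "\<exists>z\<in>M. \<forall>y\<in>M. h z \<le> h y"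
  proof (rule uniformly_convex_attains_min)
    show "M \<noteq> {}" using \<open>subspace M\<close> subspace_0 by blast
    have "- C\<^sup>2/2 \<le> h z" if "z \<in> M" for z
    proof -
      have "\<phi> z \<le> \<bar>C\<bar> * norm z"
        using bounded[OF that] by (smt (verit) mult_right_mono norm_ge_zero)
      moreover have "0 \<le> (norm z - \<bar>C\<bar>)\<^sup>2" by simp
      ultimately show ?thesis unfolding h_def by (simp add: power2_eq_square algebra_simps)
    qed
    then show "bdd_below (h ` M)" by (intro bdd_belowI2)
    show "(1/2) *\<^sub>R (z1 + z2) \<in> M \<and> h ((1/2) *\<^sub>R (z1 + z2)) \<le> (h z1 + h z2)/2 - (norm (z1 - z2))\<^sup>2/8"
      if "z1 \<in> M" "z2 \<in> M" for z1 z2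
    proof -
      have "(1/2) *\<^sub>R (z1 + z2) \<in> M" using that \<open>subspace M\<close> subspace_add subspace_scale by blast
      moreover have "\<phi> ((1/2) *\<^sub>R (z1 + z2)) = (\<phi> z1 + \<phi> z2)/2"
        using that add scale subspace_add[OF \<open>subspace M\<close> that] by simp
      ultimately show ?thesis unfolding h_def norm_midpoint_sq by argo
    qed
    show "l \<in> M \<and> h l \<le> Inf (h ` M)"
      if X: "\<And>n. X n \<in> M" "X \<longlonglongrightarrow> l" "(\<lambda>n. h (X n)) \<longlonglongrightarrow> Inf (h ` M)" for X l
    proof -
      have "l \<in> M" using closed_sequentially[OF \<open>closed M\<close> X(1) X(2)] .
      then have "(\<lambda>n. \<phi> (X n)) \<longlonglongrightarrow> \<phi> l"
        using bounded_linear_on_tendsto[OF \<open>subspace M\<close> add scale bounded X(1,2)] by blast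
      then have "(\<lambda>n. h (X n)) \<longlonglongrightarrow> h l"
        unfolding h_def by (intro tendsto_intros X(2)) simp_all
      then show ?thesis using X(3) LIMSEQ_unique \<open>l \<in> M\<close> by fastforce
    qed
  qed
  then obtain z where "z \<in> M" and "\<And>y. y \<in> M \<Longrightarrow> h z \<le> h y" by blast
  then have "inner z m = \<phi> m" if "m \<in> M" for m
    using energy_minimizer_represents[OF \<open>subspace M\<close> \<open>z \<in> M\<close> add scale _ that] unfolding h_def by blast
  with \<open>z \<in> M\<close> show ?thesis by blast
qed

lemma convergent_inner_span:
  fixes Y :: "nat \<Rightarrow> 'a::real_inner"
  assumes "\<And>k. k \<in> T \<Longrightarrow> convergent (\<lambda>j. inner (Y j) k)" and "m \<in> span T"
  shows "convergent (\<lambda>j. inner (Y j) m)"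
proof -
  have "subspace {m. convergent (\<lambda>j. inner (Y j) m)}"
    unfolding subspace_def
    by (auto simp: inner_add_right convergent_add convergent_const intro: convergent_mult)
  then show ?thesis
    using span_induct[of m T "\<lambda>m. convergent (\<lambda>j. inner (Y j) m)"] assms by auto
qed

lemma convergent_inner_closure:
  fixes Y :: "nat \<Rightarrow> 'a::real_inner"
  assumes bounded: "\<And>j. norm (Y j) \<le> C"
    and conv: "\<And>k. k \<in> S \<Longrightarrow> convergent (\<lambda>j. inner (Y j) k)" and "m \<in> closure S"
  shows "convergent (\<lambda>j. inner (Y j) m)"
  unfolding Cauchy_convergent_iff[symmetric]
proof (rule CauchyI)
  fix e :: real assume "0 < e"
  have "0 \<le> C" using bounded[of 0] norm_ge_zero order_trans by blast
  define \<delta> where "\<delta> = e / (4 * C + 4)"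
  have "0 < \<delta>" unfolding \<delta>_def using \<open>0 < e\<close> \<open>0 \<le> C\<close> by simp
  then obtain k where "k \<in> S" "norm (m - k) < \<delta>"
    using closure_approachableD[OF \<open>m \<in> closure S\<close>] by (auto simp: dist_norm)
  then have "Cauchy (\<lambda>j. inner (Y j) k)" using conv convergent_Cauchy by blast
  then obtain N where N: "\<forall>i\<ge>N. \<forall>j\<ge>N. norm (inner (Y i) k - inner (Y j) k) < e/2"
    using \<open>0 < e\<close> unfolding Cauchy_iff by (meson half_gt_zero)
  show "\<exists>N. \<forall>i\<ge>N. \<forall>j\<ge>N. norm (inner (Y i) m - inner (Y j) m) < e"
  proof (intro exI allI impI)
    fix i j assume "N \<le> i" "N \<le> j"
    have "\<bar>inner (Y i - Y j) (m - k)\<bar> \<le> norm (Y i - Y j) * norm (m - k)"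
      by (rule Cauchy_Schwarz_ineq2)
    also have "\<dots> \<le> (2 * C) * \<delta>"
      using norm_triangle_ineq4[of "Y i" "Y j"] bounded[of i] bounded[of j] \<open>norm (m - k) < \<delta>\<close> \<open>0 \<le> C\<close>
      by (intro mult_mono) auto
    also have "\<dots> < e / 2"
      unfolding \<delta>_def using \<open>0 < e\<close> \<open>0 \<le> C\<close> by (simp add: field_simps)
    finally have "\<bar>inner (Y i - Y j) (m - k)\<bar> < e / 2" .
    moreover have "inner (Y i) m - inner (Y j) m
        = (inner (Y i) k - inner (Y j) k) + inner (Y i - Y j) (m - k)"
      by (simp add: inner_diff_left inner_diff_right)
    moreover have "\<bar>inner (Y i) k - inner (Y j) k\<bar> < e / 2" using N \<open>N \<le> i\<close> \<open>N \<le> j\<close> by auto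
    ultimately show "norm (inner (Y i) m - inner (Y j) m) < e" unfolding real_norm_def by linarith
  qed
qed

lemma diagonal_subseq_inner_convergent:
  fixes y :: "nat \<Rightarrow> 'a::real_inner"
  assumes bounded: "\<And>n. norm (y n) \<le> C"
  shows "\<exists>d. strict_mono d \<and> (\<forall>k. convergent (\<lambda>j. inner (y (d j)) (y k)))"
proof -
  interpret subseqs "\<lambda>k s. convergent (\<lambda>j. inner (y (s j)) (y k))"
  proof
    fix k and s :: "nat \<Rightarrow> nat"
    have "norm (inner (y (s j)) (y k)) \<le> C * C" for j
      using Cauchy_Schwarz_ineq2[of "y (s j)" "y k"] bounded[of "s j"] bounded[of k] norm_ge_zero
      by (smt (verit) mult_mono real_norm_def)
    then have "bounded (range (\<lambda>j. inner (y (s j)) (y k)))"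
      unfolding bounded_iff by blast
    then obtain l r where "strict_mono r" "((\<lambda>j. inner (y (s j)) (y k)) \<circ> r) \<longlonglongrightarrow> l"
      using bounded_imp_convergent_subsequence by blast
    then show "\<exists>r. strict_mono r \<and> convergent (\<lambda>j. inner (y ((s \<circ> r) j)) (y k))"
      by (auto simp: convergent_def o_def)
  qed
  have "convergent (\<lambda>j. inner (y (diagseq j)) (y k))" for k
  proof -
    have "convergent (\<lambda>j. inner (y ((diagseq \<circ> (+) (Suc k)) j)) (y k))"
    proof (rule diagseq_holds)
      fix r s n assume "strict_mono (r :: nat \<Rightarrow> nat)" "convergent (\<lambda>j. inner (y (s j)) (y n))"
      from convergent_subseq_convergent[OF this(2) this(1)]
      show "convergent (\<lambda>j. inner (y ((s \<circ> r) j)) (y n))" by (simp add: o_def)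
    qed
    then show ?thesis
      using convergent_ignore_initial_segment[of "\<lambda>j. inner (y (diagseq j)) (y k)" "Suc k"]
      by (simp add: o_def add.commute)
  qed
  then show ?thesis using subseq_diagseq by blast
qed

text \<open>The limit functional on \<open>M\<close> is represented by some \<open>z \<in> M\<close> (Riesz); a general test
  vector acts on \<open>Y j \<in> M\<close> through its projection onto \<open>M\<close>.\<close>
lemma weakly_convergent_if_inner_convergent_on_closed_subspace:
  fixes Y :: "nat \<Rightarrow> 'a::{real_inner,complete_space}"
  assumes "closed M" "subspace M" and YM: "\<And>j. Y j \<in> M"
    and bounded: "\<And>j. norm (Y j) \<le> C" and conv: "\<And>m. m \<in> M \<Longrightarrow> convergent (\<lambda>j. inner (Y j) m)"
  shows "\<exists>z. Y \<rightharpoonup> z"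
proof -
  define \<phi> where "\<phi> m = lim (\<lambda>j. inner (Y j) m)" for m
  have \<phi>: "(\<lambda>j. inner (Y j) m) \<longlonglongrightarrow> \<phi> m" if "m \<in> M" for m
    using conv[OF that] unfolding \<phi>_def by (simp add: convergent_LIMSEQ_iff)
  have "\<exists>z\<in>M. \<forall>m\<in>M. inner z m = \<phi> m"
  proof (rule riesz_representation_closed_subspace[OF \<open>closed M\<close> \<open>subspace M\<close>])
    fix a b assume "a \<in> M" "b \<in> M"
    then have "(\<lambda>j. inner (Y j) (a + b)) \<longlonglongrightarrow> \<phi> a + \<phi> b"
      unfolding inner_add_right by (intro tendsto_add \<phi>)
    then show "\<phi> (a + b) = \<phi> a + \<phi> b"
      using \<phi>[OF subspace_add[OF \<open>subspace M\<close> \<open>a \<in> M\<close> \<open>b \<in> M\<close>]] LIMSEQ_unique by blast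
  next
    fix c a assume "a \<in> M"
    then have "(\<lambda>j. inner (Y j) (c *\<^sub>R a)) \<longlonglongrightarrow> c * \<phi> a"
      unfolding inner_scaleR_right by (intro tendsto_mult_left \<phi>)
    then show "\<phi> (c *\<^sub>R a) = c * \<phi> a"
      using \<phi>[OF subspace_scale[OF \<open>subspace M\<close> \<open>a \<in> M\<close>]] LIMSEQ_unique by blast
  next
    fix a assume "a \<in> M"
    have "\<bar>inner (Y j) a\<bar> \<le> C * norm a" for j
      using Cauchy_Schwarz_ineq2[of "Y j" a] bounded[of j]
      by (meson mult_right_mono norm_ge_zero order_trans)
    then show "\<bar>\<phi> a\<bar> \<le> C * norm a"
      using tendsto_rabs[OF \<phi>[OF \<open>a \<in> M\<close>]] by (meson LIMSEQ_le_const2)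
  qed
  then obtain z where "z \<in> M" and z: "\<And>m. m \<in> M \<Longrightarrow> inner z m = \<phi> m" by blast
  have "(\<lambda>j. inner (Y j) c) \<longlonglongrightarrow> inner z c" for c
  proof -
    have "\<exists>p\<in>M. \<forall>m\<in>M. inner p m = inner c m"
      by (rule riesz_representation_closed_subspace[OF \<open>closed M\<close> \<open>subspace M\<close>, where C = "norm c"])
        (simp_all add: inner_add_right Cauchy_Schwarz_ineq2)
    then obtain p where "p \<in> M" and p: "\<And>m. m \<in> M \<Longrightarrow> inner p m = inner c m" by blast
    have "inner (Y j) c = inner (Y j) p" for j using p[OF YM] by (simp add: inner_commute)
    moreover have "inner z c = \<phi> p" using p[OF \<open>z \<in> M\<close>] z[OF \<open>p \<in> M\<close>]
      by (simp add: inner_commute)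
    ultimately show ?thesis using \<phi>[OF \<open>p \<in> M\<close>] by simp
  qed
  then show ?thesis unfolding weak_conv_def by blast
qed

lemma bounded_seq_has_weakly_convergent_subseq:
  fixes y :: "nat \<Rightarrow> 'a::{real_inner,complete_space}"
  assumes bounded: "\<And>n. norm (y n) \<le> C"
  shows "\<exists>r z. strict_mono r \<and> (y \<circ> r) \<rightharpoonup> z"
proof -
  obtain d where "strict_mono d" and conv: "\<And>k. convergent (\<lambda>j. inner (y (d j)) (y k))"
    using diagonal_subseq_inner_convergent[of y C, OF bounded] by blast
  define M where "M = closure (span (range y))"
  have "norm ((y \<circ> d) j) \<le> C" for j using bounded by simp
  moreover have "convergent (\<lambda>j. inner ((y \<circ> d) j) k)" if "k \<in> span (range y)" for k
    using convergent_inner_span[of "range y" "y \<circ> d" k] conv that by (auto simp: o_def)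
  ultimately have "convergent (\<lambda>j. inner ((y \<circ> d) j) m)" if "m \<in> M" for m
    using convergent_inner_closure that unfolding M_def by blast
  moreover have "closed M" "subspace M" unfolding M_def by (simp_all add: subspace_closure)
  moreover have "(y \<circ> d) j \<in> M" for j unfolding M_def using closure_subset span_superset by fastforce
  ultimately show ?thesis
    using weakly_convergent_if_inner_convergent_on_closed_subspace \<open>strict_mono d\<close> bounded
    by (metis comp_apply)
qed

section \<open>Maximally monotone operators\<close>

lemma maximal_monotoneD:
  assumes "maximal_monotone A" "u \<in> A x" "v \<in> A y"
  shows "0 \<le> inner (x - y) (u - v)"
  using assms unfolding maximal_monotone_def monotone_op_def by blast

lemma maximal_monotone_memI:
  assumes "maximal_monotone A" "\<And>y v. v \<in> A y \<Longrightarrow> 0 \<le> inner (x - y) (u - v)"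
  shows "u \<in> A x"
  using assms unfolding maximal_monotone_def by blast

definition op_graph :: "('a \<Rightarrow> 'b set) \<Rightarrow> ('a \<times> 'b) set" where
  "op_graph A = {(x, u). u \<in> A x}"

lemma maximal_monotone_graph_nonempty:
  assumes "maximal_monotone A"
  shows "op_graph A \<noteq> {}"
  using maximal_monotone_memI[OF assms, of 0 0] unfolding op_graph_def by auto

text \<open>Fitzpatrick's function \<open>F\<^sub>A (x, u) = sup {\<langle>x, v\<rangle> + \<langle>y, u\<rangle> - \<langle>y, v\<rangle> | v \<in> A y}\<close>;
  outside \<open>fitzpatrick_dom A\<close> the supremum is infinite and \<open>fitzpatrick A\<close> is junk.\<close>
definition fitzpatrick_coupling :: "'a::real_inner \<times> 'a \<Rightarrow> 'a \<times> 'a \<Rightarrow> real" where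
  "fitzpatrick_coupling w z = inner (fst z) (snd w) + inner (fst w) (snd z) - inner (fst w) (snd w)"

definition fitzpatrick_dom :: "('a::real_inner \<Rightarrow> 'a set) \<Rightarrow> ('a \<times> 'a) set" where
  "fitzpatrick_dom A = {z. bdd_above ((\<lambda>w. fitzpatrick_coupling w z) ` op_graph A)}"

definition fitzpatrick :: "('a::real_inner \<Rightarrow> 'a set) \<Rightarrow> 'a \<times> 'a \<Rightarrow> real" where
  "fitzpatrick A z = (SUP w\<in>op_graph A. fitzpatrick_coupling w z)"

lemma fitzpatrick_coupling_le:
  assumes "z \<in> fitzpatrick_dom A" "w \<in> op_graph A"
  shows "fitzpatrick_coupling w z \<le> fitzpatrick A z"
  using assms unfolding fitzpatrick_dom_def fitzpatrick_def by (auto intro: cSup_upper)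

lemma fitzpatrick_le:
  assumes "op_graph A \<noteq> {}" "\<forall>w\<in>op_graph A. fitzpatrick_coupling w z \<le> c"
  shows "z \<in> fitzpatrick_dom A" and "fitzpatrick A z \<le> c"
  using assms unfolding fitzpatrick_dom_def fitzpatrick_def
  by (auto intro!: bdd_aboveI2 cSup_least)

lemma fitzpatrick_coupling_affine:
  assumes "a + b = 1"
  shows "fitzpatrick_coupling w (a *\<^sub>R z1 + b *\<^sub>R z2)
    = a * fitzpatrick_coupling w z1 + b * fitzpatrick_coupling w z2"
proof -
  have "fitzpatrick_coupling w (a *\<^sub>R z1 + b *\<^sub>R z2)
      = a * (inner (fst z1) (snd w) + inner (fst w) (snd z1))
        + b * (inner (fst z2) (snd w) + inner (fst w) (snd z2)) - (a + b) * inner (fst w) (snd w)"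
    unfolding fitzpatrick_coupling_def using assms by (simp add: inner_add_left inner_add_right algebra_simps)
  then show ?thesis unfolding fitzpatrick_coupling_def by (simp add: algebra_simps)
qed

lemma maximal_monotone_coupling_le_inner:
  assumes "maximal_monotone A" "w \<in> op_graph A" "w' \<in> op_graph A"
  shows "fitzpatrick_coupling w' w \<le> inner (fst w) (snd w)"
proof -
  have "0 \<le> inner (fst w - fst w') (snd w - snd w')"
    using assms maximal_monotoneD unfolding op_graph_def by (cases w, cases w') auto
  then show ?thesis
    unfolding fitzpatrick_coupling_def by (simp add: inner_diff_left inner_diff_right inner_commute)
qed

lemma maximal_monotone_inner_le_fitzpatrick:
  assumes "maximal_monotone A" "z \<in> fitzpatrick_dom A"
  shows "inner (fst z) (snd z) \<le> fitzpatrick A z"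
proof (rule ccontr)
  assume "\<not> inner (fst z) (snd z) \<le> fitzpatrick A z"
  then have lt: "fitzpatrick A z < inner (fst z) (snd z)" by simp
  have "snd z \<in> A (fst z)"
  proof (rule maximal_monotone_memI[OF assms(1)])
    fix y v assume "v \<in> A y"
    then have "fitzpatrick_coupling (y, v) z < inner (fst z) (snd z)"
      using fitzpatrick_coupling_le[OF assms(2)] lt unfolding op_graph_def by fastforce
    then show "0 \<le> inner (fst z - y) (snd z - v)"
      unfolding fitzpatrick_coupling_def by (simp add: inner_diff_left inner_diff_right inner_commute)
  qed
  then have "fitzpatrick_coupling z z \<le> fitzpatrick A z"
    using fitzpatrick_coupling_le[OF assms(2)] unfolding op_graph_def by (cases z) auto
  then show False using lt unfolding fitzpatrick_coupling_def by simp
qed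

lemma fitzpatrick_midpoint:
  assumes "op_graph A \<noteq> {}" "z1 \<in> fitzpatrick_dom A" "z2 \<in> fitzpatrick_dom A"
  shows "(1/2) *\<^sub>R (z1 + z2) \<in> fitzpatrick_dom A"
    and "fitzpatrick A ((1/2) *\<^sub>R (z1 + z2)) \<le> (fitzpatrick A z1 + fitzpatrick A z2) / 2"
proof -
  have "\<forall>w\<in>op_graph A.
      fitzpatrick_coupling w ((1/2) *\<^sub>R (z1 + z2)) \<le> (fitzpatrick A z1 + fitzpatrick A z2) / 2"
    using fitzpatrick_coupling_affine[of "1/2" "1/2" _ z1 z2]
      fitzpatrick_coupling_le[OF assms(2)] fitzpatrick_coupling_le[OF assms(3)]
    by (fastforce simp: scaleR_add_right)
  from fitzpatrick_le[OF assms(1) this] show "(1/2) *\<^sub>R (z1 + z2) \<in> fitzpatrick_dom A"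
    and "fitzpatrick A ((1/2) *\<^sub>R (z1 + z2)) \<le> (fitzpatrick A z1 + fitzpatrick A z2) / 2" .
qed

lemma fitzpatrick_half_norm_sq_attains_min:
  fixes A :: "'a::{real_inner,complete_space} \<Rightarrow> 'a set"
  assumes "maximal_monotone A"
  defines "h \<equiv> \<lambda>z. fitzpatrick A z + (norm z)\<^sup>2 / 2"
  shows "\<exists>z\<in>fitzpatrick_dom A. \<forall>y\<in>fitzpatrick_dom A. h z \<le> h y"
proof (rule uniformly_convex_attains_min)
  note graph_ne = maximal_monotone_graph_nonempty[OF assms(1)]
  have "op_graph A \<subseteq> fitzpatrick_dom A"
    using fitzpatrick_le(1)[OF graph_ne] maximal_monotone_coupling_le_inner[OF assms(1)] by blast
  then show "fitzpatrick_dom A \<noteq> {}" using graph_ne by blast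
  have "0 \<le> h z" if "z \<in> fitzpatrick_dom A" for z
  proof -
    have "0 \<le> inner (fst z + snd z) (fst z + snd z)" by simp
    then have "0 \<le> inner (fst z) (snd z) + (norm z)\<^sup>2/2"
      by (simp add: power2_norm_eq_inner inner_prod_def inner_add_left inner_add_right inner_commute) argo
    then show ?thesis unfolding h_def using maximal_monotone_inner_le_fitzpatrick[OF assms(1) that] by linarith
  qed
  then show "bdd_below (h ` fitzpatrick_dom A)" by (intro bdd_belowI2)
  show "(1/2) *\<^sub>R (z1 + z2) \<in> fitzpatrick_dom A \<and>
      h ((1/2) *\<^sub>R (z1 + z2)) \<le> (h z1 + h z2)/2 - (norm (z1 - z2))\<^sup>2/8"
    if "z1 \<in> fitzpatrick_dom A" "z2 \<in> fitzpatrick_dom A" for z1 z2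
    using fitzpatrick_midpoint[OF graph_ne that] unfolding h_def norm_midpoint_sq by argo
  show "l \<in> fitzpatrick_dom A \<and> h l \<le> Inf (h ` fitzpatrick_dom A)"
    if X: "\<And>n. X n \<in> fitzpatrick_dom A" "X \<longlonglongrightarrow> l" "(\<lambda>n. h (X n)) \<longlonglongrightarrow> Inf (h ` fitzpatrick_dom A)"
    for X l
  proof -
    have "\<forall>w\<in>op_graph A. fitzpatrick_coupling w l \<le> Inf (h ` fitzpatrick_dom A) - (norm l)\<^sup>2/2"
    proof
      fix w assume "w \<in> op_graph A"
      have "(\<lambda>n. fitzpatrick_coupling w (X n) + (norm (X n))\<^sup>2/2)
          \<longlonglongrightarrow> fitzpatrick_coupling w l + (norm l)\<^sup>2/2"
        unfolding fitzpatrick_coupling_def by (intro tendsto_intros X(2)) simp_all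
      moreover have "fitzpatrick_coupling w (X n) + (norm (X n))\<^sup>2/2 \<le> h (X n)" for n
        unfolding h_def using fitzpatrick_coupling_le[OF X(1) \<open>w \<in> op_graph A\<close>] by simp
      ultimately have "fitzpatrick_coupling w l + (norm l)\<^sup>2/2 \<le> Inf (h ` fitzpatrick_dom A)"
        using LIMSEQ_le[OF _ X(3)] by blast
      then show "fitzpatrick_coupling w l \<le> Inf (h ` fitzpatrick_dom A) - (norm l)\<^sup>2/2" by argo
    qed
    from fitzpatrick_le[OF graph_ne this] show ?thesis
      unfolding h_def by argo
  qed
qed

lemma fitzpatrick_minimizer_variational:
  assumes "maximal_monotone A" "z \<in> fitzpatrick_dom A" "w \<in> op_graph A"
    and min: "\<And>y. y \<in> fitzpatrick_dom A \<Longrightarrow>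
      fitzpatrick A z + (norm z)\<^sup>2 / 2 \<le> fitzpatrick A y + (norm y)\<^sup>2 / 2"
  shows "fitzpatrick A z \<le> inner (fst w) (snd w) + inner z (w - z)"
proof (rule le_if_le_add_small_multiple[where c = "(norm (w - z))\<^sup>2/2"])
  fix t :: real assume "0 < t" "t \<le> 1"
  define zt where "zt = z + t *\<^sub>R (w - z)"
  have "\<forall>w'\<in>op_graph A. fitzpatrick_coupling w' zt \<le> (1 - t) * fitzpatrick A z + t * inner (fst w) (snd w)"
  proof
    fix w' assume "w' \<in> op_graph A"
    have "zt = (1 - t) *\<^sub>R z + t *\<^sub>R w" unfolding zt_def by (simp add: algebra_simps)
    then have "fitzpatrick_coupling w' zt = (1 - t) * fitzpatrick_coupling w' z + t * fitzpatrick_coupling w' w"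
      by (simp add: fitzpatrick_coupling_affine)
    also have "\<dots> \<le> (1 - t) * fitzpatrick A z + t * inner (fst w) (snd w)"
      using fitzpatrick_coupling_le[OF assms(2) \<open>w' \<in> _\<close>]
        maximal_monotone_coupling_le_inner[OF assms(1,3) \<open>w' \<in> _\<close>] \<open>0 < t\<close> \<open>t \<le> 1\<close>
      by (intro add_mono mult_left_mono) auto
    finally show "fitzpatrick_coupling w' zt \<le> (1 - t) * fitzpatrick A z + t * inner (fst w) (snd w)" .
  qed
  note zt = fitzpatrick_le[OF maximal_monotone_graph_nonempty[OF assms(1)] this]
  have "t * fitzpatrick A z \<le> t * (inner (fst w) (snd w) + inner z (w - z) + t * ((norm (w - z))\<^sup>2/2))"
    using min[OF zt(1)] zt(2) norm_add_scaleR_sq[of z t "w - z", folded zt_def]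
    by (simp add: algebra_simps power2_eq_square)
  then show "fitzpatrick A z \<le> inner (fst w) (snd w) + inner z (w - z) + t * ((norm (w - z))\<^sup>2/2)"
    using \<open>0 < t\<close> by simp
qed

text \<open>Minty's theorem, in the form \<open>0 \<in> ran (Id + A)\<close>. The minimizer \<open>(x, u)\<close> of
  \<open>F\<^sub>A + \<parallel>\<cdot>\<parallel>\<^sup>2/2\<close> satisfies \<open>\<langle>y + u, v + x\<rangle> \<ge> \<parallel>x + u\<parallel>\<^sup>2 \<ge> 0\<close> on the graph, so \<open>-x \<in> A(-u)\<close>
  by maximality, and then \<open>x + u = 0\<close>.\<close>
lemma maximal_monotone_ex_neg_mem:
  fixes A :: "'a::{real_inner,complete_space} \<Rightarrow> 'a set"
  assumes "maximal_monotone A"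
  shows "\<exists>p. - p \<in> A p"
proof -
  obtain z where "z \<in> fitzpatrick_dom A" and min: "\<And>y. y \<in> fitzpatrick_dom A \<Longrightarrow>
      fitzpatrick A z + (norm z)\<^sup>2 / 2 \<le> fitzpatrick A y + (norm y)\<^sup>2 / 2"
    using fitzpatrick_half_norm_sq_attains_min[OF assms] by blast
  obtain x u where z: "z = (x, u)" by (cases z)
  have key: "inner (x + u) (x + u) \<le> inner (y + u) (v + x)" if "v \<in> A y" for y v
  proof -
    have "(y, v) \<in> op_graph A" using that unfolding op_graph_def by simp
    from fitzpatrick_minimizer_variational[OF assms \<open>z \<in> _\<close> this min]
      maximal_monotone_inner_le_fitzpatrick[OF assms \<open>z \<in> _\<close>]
    have "inner x u \<le> inner y v + inner (x, u) ((y, v) - (x, u))"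
      unfolding z by simp
    then show ?thesis
      by (simp add: inner_add_left inner_add_right inner_diff_left inner_diff_right inner_commute algebra_simps)
  qed
  have "- x \<in> A (- u)"
  proof (rule maximal_monotone_memI[OF assms])
    fix y v assume "v \<in> A y"
    from key[OF this] have "0 \<le> inner (y + u) (v + x)" using inner_ge_zero order_trans by blast
    then show "0 \<le> inner (- u - y) (- x - v)"
      by (simp add: inner_add_left inner_add_right inner_diff_left inner_diff_right inner_commute)
  qed
  moreover from key[OF this] have "x = - u"
    using inner_self_nonpos_imp_zero[of "x + u"] by (simp add: eq_neg_iff_add_eq_0)
  ultimately have "- (- u) \<in> A (- u)" by simp
  then show ?thesis by blast
qed

lemma maximal_monotone_translate:
  assumes "maximal_monotone A"
  shows "maximal_monotone (\<lambda>x. (\<lambda>u. u - c) ` A x)"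
  unfolding maximal_monotone_def monotone_op_def
proof (intro conjI allI impI)
  fix x y u v assume "u \<in> (\<lambda>u. u - c) ` A x" "v \<in> (\<lambda>u. u - c) ` A y"
  then show "0 \<le> inner (x - y) (u - v)" using maximal_monotoneD[OF assms] by auto
next
  fix x u assume related: "\<forall>y v. v \<in> (\<lambda>u. u - c) ` A y \<longrightarrow> 0 \<le> inner (x - y) (u - v)"
  have "u + c \<in> A x"
  proof (rule maximal_monotone_memI[OF assms])
    fix y v assume "v \<in> A y"
    then have "0 \<le> inner (x - y) (u - (v - c))" using related by blast
    then show "0 \<le> inner (x - y) (u + c - v)" by (simp add: algebra_simps)
  qed
  then show "u \<in> (\<lambda>u. u - c) ` A x" by (metis add_diff_cancel image_eqI)
qed

lemma maximal_monotone_resolvent_ex: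
  fixes A :: "'a::{real_inner,complete_space} \<Rightarrow> 'a set"
  assumes "maximal_monotone A"
  shows "\<exists>p. z - p \<in> A p"
proof -
  obtain p where "- p \<in> (\<lambda>u. u - z) ` A p"
    using maximal_monotone_ex_neg_mem[OF maximal_monotone_translate[OF assms]] by blast
  then have "z - p \<in> A p" by (auto simp: algebra_simps)
  then show ?thesis by blast
qed

lemma maximal_monotone_resolvent_unique:
  assumes "maximal_monotone A" "z - p1 \<in> A p1" "z - p2 \<in> A p2"
  shows "p1 = p2"
proof -
  have "0 \<le> inner (p1 - p2) ((z - p1) - (z - p2))" using maximal_monotoneD[OF assms] .
  then have "inner (p1 - p2) (p1 - p2) \<le> 0" by (simp add: inner_diff_left inner_diff_right inner_commute)
  then show ?thesis using inner_self_nonpos_imp_zero[of "p1 - p2"] by simp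
qed

lemma resolvent_mem:
  fixes A :: "'a::{real_inner,complete_space} \<Rightarrow> 'a set"
  assumes "maximal_monotone A"
  shows "z - resolvent A z \<in> A (resolvent A z)"
  unfolding resolvent_def
  by (rule theI') (use maximal_monotone_resolvent_ex[OF assms] maximal_monotone_resolvent_unique[OF assms] in blast)

lemma resolvent_eqI:
  fixes A :: "'a::{real_inner,complete_space} \<Rightarrow> 'a set"
  assumes "maximal_monotone A" "z - p \<in> A p"
  shows "resolvent A z = p"
  using maximal_monotone_resolvent_unique[OF assms(1) resolvent_mem[OF assms(1)] assms(2)] .

lemma resolvent_firmly_nonexpansive:
  fixes A :: "'a::{real_inner,complete_space} \<Rightarrow> 'a set"
  assumes "maximal_monotone A"
  shows "(norm (resolvent A z1 - resolvent A z2))\<^sup>2 \<le> inner (resolvent A z1 - resolvent A z2) (z1 - z2)"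
proof -
  have "0 \<le> inner (resolvent A z1 - resolvent A z2) ((z1 - resolvent A z1) - (z2 - resolvent A z2))"
    using maximal_monotoneD[OF assms resolvent_mem[OF assms] resolvent_mem[OF assms]] .
  then show ?thesis unfolding power2_norm_eq_inner
    by (simp add: inner_diff_left inner_diff_right inner_commute algebra_simps)
qed

lemma inv_id_plus_eq_resolvent: "inv_id_plus T = resolvent (\<lambda>x. {T x})"
proof -
  have "(z + T z = y) = (y - z \<in> {T z})" for y z by (auto simp: algebra_simps)
  then show ?thesis unfolding inv_id_plus_def resolvent_def by presburger
qed

lemma maximal_monotone_positive_linear:
  fixes T :: "'a::real_inner \<Rightarrow> 'a"
  assumes "linear T" and pos: "\<And>x. 0 \<le> inner x (T x)"
  shows "maximal_monotone (\<lambda>x. {T x})"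
  unfolding maximal_monotone_def monotone_op_def
proof (intro conjI allI impI)
  fix x y u v assume "u \<in> {T x}" "v \<in> {T y}"
  then show "0 \<le> inner (x - y) (u - v)" using pos[of "x - y"] linear_diff[OF \<open>linear T\<close>] by simp
next
  fix x u assume related: "\<forall>y v. v \<in> {T y} \<longrightarrow> 0 \<le> inner (x - y) (u - v)"
  have "inner d (u - T x) = 0" for d
  proof (rule nonneg_quadratic_imp_linear_coeff_zero)
    show "0 \<le> inner d (T d)" by (rule pos)
    fix t
    have "0 \<le> inner (x - (x - t *\<^sub>R d)) (u - T (x - t *\<^sub>R d))" using related by blast
    moreover have "T (x - t *\<^sub>R d) = T x - t *\<^sub>R T d"
      using linear_diff[OF \<open>linear T\<close>] linear_scale[OF \<open>linear T\<close>] by metis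
    ultimately show "0 \<le> t * inner d (u - T x) + t\<^sup>2 * inner d (T d)"
      by (simp add: inner_diff_right power2_eq_square algebra_simps)
  qed
  then have "u - T x = 0" using inner_eq_zero_iff by metis
  then show "u \<in> {T x}" by simp
qed

lemma inv_id_plus_eq:
  fixes T :: "'a::{real_inner,complete_space} \<Rightarrow> 'a"
  assumes "linear T" "\<And>x. 0 \<le> inner x (T x)"
  shows "inv_id_plus T y + T (inv_id_plus T y) = y"
  using resolvent_mem[OF maximal_monotone_positive_linear[OF assms], of y]
  unfolding inv_id_plus_eq_resolvent by (simp add: algebra_simps)

lemma inv_id_plus_eqI:
  fixes T :: "'a::{real_inner,complete_space} \<Rightarrow> 'a"
  assumes "linear T" "\<And>x. 0 \<le> inner x (T x)" "z + T z = y"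
  shows "inv_id_plus T y = z"
  using resolvent_eqI[OF maximal_monotone_positive_linear[OF assms(1,2)], of y z] assms(3)
  unfolding inv_id_plus_eq_resolvent by (simp add: algebra_simps)

section \<open>Krasnosel'skii--Mann iteration\<close>

lemma quasi_fejer_convergent:
  fixes a c :: "nat \<Rightarrow> real"
  assumes "\<And>n. 0 \<le> a n" "\<And>n. a (Suc n) \<le> a n + c n" "summable c" "\<And>n. 0 \<le> c n"
  shows "convergent a"
proof -
  define b where "b n = a n - (\<Sum>k<n. c k)" for n
  have "decseq b"
    unfolding decseq_Suc_iff b_def using assms(2) by (simp add: algebra_simps)
  moreover have "- suminf c \<le> b n" for n
    using sum_le_suminf[OF assms(3), of "{..<n}"] assms(1)[of n] assms(4) unfolding b_def by simp
  ultimately obtain l where "b \<longlonglongrightarrow> l" using decseq_convergent by blast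
  then have "(\<lambda>n. b n + (\<Sum>k<n. c k)) \<longlonglongrightarrow> l + suminf c"
    using summable_LIMSEQ[OF assms(3)] by (intro tendsto_intros)
  then show ?thesis unfolding b_def convergent_def by auto
qed

lemma not_tendsto_imp_subseq_bounded_away:
  fixes X :: "nat \<Rightarrow> real"
  assumes "\<not> X \<longlonglongrightarrow> l"
  shows "\<exists>e>0. \<exists>s :: nat \<Rightarrow> nat. strict_mono s \<and> (\<forall>n. e \<le> \<bar>X (s n) - l\<bar>)"
proof -
  from assms obtain e where "e > 0" and e: "\<forall>N. \<exists>n\<ge>N. \<not> dist (X n) l < e"
    unfolding LIMSEQ_def by blast
  define S where "S = {n. e \<le> \<bar>X n - l\<bar>}"
  have "infinite S"
    unfolding infinite_nat_iff_unbounded_le S_def using e by (auto simp: dist_real_def not_less)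
  then have "strict_mono (enumerate S)" "\<forall>n. e \<le> \<bar>X (enumerate S n) - l\<bar>"
    using enumerate_mono enumerate_in_set[of S] unfolding strict_mono_def by (auto simp: S_def)
  with \<open>e > 0\<close> show ?thesis by blast
qed

lemma nonexpansive_demiclosed:
  fixes y :: "nat \<Rightarrow> 'a::real_inner"
  assumes nonexpansive: "\<And>a b. norm (N a - N b) \<le> norm (a - b)"
    and "y \<rightharpoonup> w" and residual: "(\<lambda>j. N (y j) - y j) \<longlonglongrightarrow> 0" and "\<And>j. norm (y j) \<le> C"
  shows "N w = w"
proof -
  define e where "e j = norm (N (y j) - y j)" for j
  have "e \<longlonglongrightarrow> 0" unfolding e_def using tendsto_norm_zero[OF residual] .
  have ineq: "(norm (w - N w))\<^sup>2 \<le> (e j)\<^sup>2 + 2 * (e j * norm (y j - w)) - 2 * inner (y j - w) (w - N w)" for j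
  proof -
    have "norm (y j - N w) \<le> norm (y j - N (y j)) + norm (N (y j) - N w)"
      using norm_triangle_ineq[of "y j - N (y j)" "N (y j) - N w"] by simp
    also have "\<dots> \<le> e j + norm (y j - w)"
      unfolding e_def using nonexpansive[of "y j" w] by (simp add: norm_minus_commute)
    finally have "(norm (y j - N w))\<^sup>2 \<le> (e j + norm (y j - w))\<^sup>2"
      by (intro power_mono) auto
    moreover have "(norm ((y j - w) + (w - N w)))\<^sup>2
        = (norm (y j - w))\<^sup>2 + 2 * inner (y j - w) (w - N w) + (norm (w - N w))\<^sup>2"
      unfolding power2_norm_eq_inner
      by (simp only: inner_add_left inner_add_right inner_commute[of "w - N w" "y j - w"])
    moreover have "(e j + norm (y j - w))\<^sup>2 = (e j)\<^sup>2 + 2 * (e j * norm (y j - w)) + (norm (y j - w))\<^sup>2"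
      by (simp add: power2_eq_square algebra_simps)
    ultimately show ?thesis by simp
  qed
  have "(\<lambda>j. inner (y j) (w - N w) - inner w (w - N w)) \<longlonglongrightarrow> 0"
    using \<open>y \<rightharpoonup> w\<close> LIM_zero unfolding weak_conv_def by blast
  then have inner0: "(\<lambda>j. inner (y j - w) (w - N w)) \<longlonglongrightarrow> 0" by (simp add: inner_diff_left)
  have "norm (y j - w) \<le> C + norm w" for j
    using norm_triangle_ineq4[of "y j" w] assms(4)[of j] by linarith
  then have "\<forall>\<^sub>F j in sequentially. norm (e j * norm (y j - w)) \<le> e j * (C + norm w)"
    unfolding e_def by (intro always_eventually allI) (simp add: mult_left_mono)
  then have "(\<lambda>j. e j * norm (y j - w)) \<longlonglongrightarrow> 0"
    by (rule Lim_null_comparison) (use tendsto_mult[OF \<open>e \<longlonglongrightarrow> 0\<close> tendsto_const] in simp)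
  then have "(\<lambda>j. (e j)\<^sup>2 + 2 * (e j * norm (y j - w)) - 2 * inner (y j - w) (w - N w))
      \<longlonglongrightarrow> 0\<^sup>2 + 2 * 0 - 2 * 0"
    using \<open>e \<longlonglongrightarrow> 0\<close> inner0 by (intro tendsto_intros)
  then have "(norm (w - N w))\<^sup>2 \<le> 0\<^sup>2 + 2 * 0 - 2 * 0"
    by (rule LIMSEQ_le_const) (use ineq in auto)
  then show ?thesis by simp
qed

text \<open>If \<open>\<parallel>z n - w\<parallel>\<close> and \<open>\<parallel>z n - w'\<parallel>\<close> converge, so does \<open>\<langle>z n, w' - w\<rangle>\<close>; along the two
  subsequences its limit is both \<open>\<langle>w, w' - w\<rangle>\<close> and \<open>\<langle>w', w' - w\<rangle>\<close>.\<close>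
lemma weak_cluster_point_unique:
  fixes z :: "nat \<Rightarrow> 'a::real_inner"
  assumes dist_convergent: "convergent (\<lambda>n. norm (z n - w))" "convergent (\<lambda>n. norm (z n - w'))"
    and sub: "strict_mono r" "(z \<circ> r) \<rightharpoonup> w" "strict_mono r'" "(z \<circ> r') \<rightharpoonup> w'"
  shows "w = w'"
proof -
  have "((norm (z n - w))\<^sup>2 - (norm (z n - w'))\<^sup>2 - (norm w)\<^sup>2 + (norm w')\<^sup>2) / 2
      = inner (z n) (w' - w)" for n
    unfolding power2_norm_eq_inner
    by (simp add: inner_diff_left inner_diff_right inner_commute algebra_simps) argo
  moreover have "convergent (\<lambda>n. ((norm (z n - w))\<^sup>2 - (norm (z n - w'))\<^sup>2 - (norm w)\<^sup>2 + (norm w')\<^sup>2) / 2)"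
  proof -
    obtain l l' where "(\<lambda>n. norm (z n - w)) \<longlonglongrightarrow> l" "(\<lambda>n. norm (z n - w')) \<longlonglongrightarrow> l'"
      using dist_convergent unfolding convergent_def by blast
    then have "(\<lambda>n. ((norm (z n - w))\<^sup>2 - (norm (z n - w'))\<^sup>2 - (norm w)\<^sup>2 + (norm w')\<^sup>2) / 2)
        \<longlonglongrightarrow> (l\<^sup>2 - l'\<^sup>2 - (norm w)\<^sup>2 + (norm w')\<^sup>2) / 2"
      by (intro tendsto_intros) auto
    then show ?thesis unfolding convergent_def by blast
  qed
  ultimately obtain l where l: "(\<lambda>n. inner (z n) (w' - w)) \<longlonglongrightarrow> l"
    unfolding convergent_def by auto
  have "inner w (w' - w) = l" "inner w' (w' - w) = l"
    using sub l LIMSEQ_subseq_LIMSEQ[OF l] LIMSEQ_unique unfolding weak_conv_def o_def by blast+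
  then have "inner (w' - w) (w' - w) = 0" by (simp add: inner_diff_left)
  then show ?thesis by simp
qed

lemma opial_weak_convergence:
  fixes z :: "nat \<Rightarrow> 'a::{real_inner,complete_space}"
  assumes bounded: "\<And>n. norm (z n) \<le> C"
    and dist_convergent: "\<And>w. P w \<Longrightarrow> convergent (\<lambda>n. norm (z n - w))"
    and cluster: "\<And>r w. strict_mono r \<Longrightarrow> (z \<circ> r) \<rightharpoonup> w \<Longrightarrow> P w"
  shows "\<exists>w. P w \<and> z \<rightharpoonup> w"
proof -
  have unique: "w = w'" if "strict_mono r" "(z \<circ> r) \<rightharpoonup> w" "strict_mono r'" "(z \<circ> r') \<rightharpoonup> w'"
    for r r' w w'
    by (rule weak_cluster_point_unique[OF dist_convergent[OF cluster[OF that(1,2)]]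
          dist_convergent[OF cluster[OF that(3,4)]] that])
  obtain r w where r: "strict_mono r" "(z \<circ> r) \<rightharpoonup> w"
    using bounded_seq_has_weakly_convergent_subseq[of z C, OF bounded] by blast
  have "(\<lambda>n. inner (z n) c) \<longlonglongrightarrow> inner w c" for c
  proof (rule ccontr)
    assume "\<not> (\<lambda>n. inner (z n) c) \<longlonglongrightarrow> inner w c"
    then obtain e and s :: "nat \<Rightarrow> nat" where "e > 0" "strict_mono s" and away: "\<And>n. e \<le> \<bar>inner (z (s n)) c - inner w c\<bar>"
      using not_tendsto_imp_subseq_bounded_away by metis
    obtain r' w' where "strict_mono r'" "((z \<circ> s) \<circ> r') \<rightharpoonup> w'"
      using bounded_seq_has_weakly_convergent_subseq[of "z \<circ> s" C] bounded by auto
    then have "strict_mono (s \<circ> r')" "(z \<circ> (s \<circ> r')) \<rightharpoonup> w'"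
      using \<open>strict_mono s\<close> strict_mono_o by (auto simp: o_assoc)
    then have "w' = w" using unique r by blast
    have "(\<lambda>j. inner (z (s (r' j))) c) \<longlonglongrightarrow> inner w' c"
      using \<open>(z \<circ> (s \<circ> r')) \<rightharpoonup> w'\<close> unfolding weak_conv_def o_def by blast
    from tendsto_rabs[OF tendsto_diff[OF this tendsto_const]]
    have "(\<lambda>j. \<bar>inner (z (s (r' j))) c - inner w c\<bar>) \<longlonglongrightarrow> \<bar>inner w' c - inner w c\<bar>" .
    then have "e \<le> \<bar>inner w' c - inner w c\<bar>" by (rule LIMSEQ_le_const) (use away in blast)
    then show False using \<open>w' = w\<close> \<open>e > 0\<close> by simp
  qed
  then show ?thesis using cluster[OF r] unfolding weak_conv_def by blast
qed

locale krasnoselskii_mann =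
  fixes N :: "'a::{real_inner,complete_space} \<Rightarrow> 'a" and z eps :: "nat \<Rightarrow> 'a"
    and mu :: "nat \<Rightarrow> real" and f :: 'a
  assumes nonexpansive: "\<And>a b. norm (N a - N b) \<le> norm (a - b)"
    and fixpoint: "N f = f"
    and step: "\<And>n. z (Suc n) = z n + mu n *\<^sub>R (N (z n) - z n) + eps n"
    and mu_range: "\<And>n. 0 < mu n \<and> mu n < 1"
    and mu_not_summable: "\<not> summable (\<lambda>n. mu n * (1 - mu n))"
    and eps_summable: "summable (\<lambda>n. norm (eps n))"
begin

definition relaxed :: "nat \<Rightarrow> 'a" where
  "relaxed n = z n + mu n *\<^sub>R (N (z n) - z n)"

definition residual :: "nat \<Rightarrow> real" where
  "residual n = norm (N (z n) - z n)"

lemma z_Suc: "z (Suc n) = relaxed n + eps n"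
  unfolding relaxed_def using step by simp

lemma relaxed_dist_sq:
  assumes "N w = w"
  shows "(norm (relaxed n - w))\<^sup>2 \<le> (norm (z n - w))\<^sup>2 - mu n * (1 - mu n) * (residual n)\<^sup>2"
proof -
  have "relaxed n - w = (1 - mu n) *\<^sub>R (z n - w) + mu n *\<^sub>R (N (z n) - w)"
    unfolding relaxed_def by (simp add: algebra_simps)
  then have "(norm (relaxed n - w))\<^sup>2 = (1 - mu n) * (norm (z n - w))\<^sup>2 + mu n * (norm (N (z n) - w))\<^sup>2
      - mu n * (1 - mu n) * (norm ((z n - w) - (N (z n) - w)))\<^sup>2"
    using norm_convex_combination_sq by metis
  moreover have "(norm (N (z n) - w))\<^sup>2 \<le> (norm (z n - w))\<^sup>2"
    using nonexpansive[of "z n" w] assms by (intro power_mono) auto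
  then have "mu n * (norm (N (z n) - w))\<^sup>2 \<le> mu n * (norm (z n - w))\<^sup>2"
    using mu_range[of n] by (intro mult_left_mono) auto
  moreover have "norm ((z n - w) - (N (z n) - w)) = residual n"
    unfolding residual_def by (simp add: norm_minus_commute)
  ultimately show ?thesis by (simp add: algebra_simps)
qed

lemma relaxed_dist_le:
  assumes "N w = w"
  shows "norm (relaxed n - w) \<le> norm (z n - w)"
proof -
  have "0 \<le> mu n * (1 - mu n) * (residual n)\<^sup>2" using mu_range[of n] by simp
  then have "(norm (relaxed n - w))\<^sup>2 \<le> (norm (z n - w))\<^sup>2"
    using relaxed_dist_sq[OF assms, of n] by linarith
  then show ?thesis by (rule power2_le_imp_le) simp
qed

lemma dist_fixpoint_convergent:
  assumes "N w = w"
  shows "convergent (\<lambda>n. norm (z n - w))"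
proof (rule quasi_fejer_convergent[where c = "\<lambda>n. norm (eps n)"])
  show "norm (z (Suc n) - w) \<le> norm (z n - w) + norm (eps n)" for n
    using norm_triangle_ineq[of "relaxed n - w" "eps n"] relaxed_dist_le[OF assms, of n]
    unfolding z_Suc by (simp add: algebra_simps)
qed (use eps_summable in auto)

lemma dist_fixpoint_bounded: obtains C where "\<And>n. norm (z n - f) \<le> C"
  using convergent_imp_Bseq[OF dist_fixpoint_convergent[OF fixpoint]] unfolding Bseq_def by auto

lemma residual_sq_le_dist_decrease:
  assumes C: "\<And>n. norm (z n - f) \<le> C"
  shows "mu n * (1 - mu n) * (residual n)\<^sup>2
    \<le> (norm (z n - f))\<^sup>2 - (norm (z (Suc n) - f))\<^sup>2 + (2 * C + suminf (\<lambda>n. norm (eps n))) * norm (eps n)"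
proof -
  have "norm (z (Suc n) - f) \<le> norm (relaxed n - f) + norm (eps n)"
    using norm_triangle_ineq[of "relaxed n - f" "eps n"] unfolding z_Suc by (simp add: algebra_simps)
  then have "(norm (z (Suc n) - f))\<^sup>2 \<le> (norm (relaxed n - f) + norm (eps n))\<^sup>2"
    by (intro power_mono) auto
  also have "\<dots> = (norm (relaxed n - f))\<^sup>2 + (2 * norm (relaxed n - f) + norm (eps n)) * norm (eps n)"
    by (simp add: power2_eq_square algebra_simps)
  also have "\<dots> \<le> (norm (relaxed n - f))\<^sup>2 + (2 * C + suminf (\<lambda>n. norm (eps n))) * norm (eps n)"
  proof -
    have "norm (eps n) \<le> suminf (\<lambda>n. norm (eps n))"
      using sum_le_suminf[OF eps_summable, of "{n}"] by simp
    then have "2 * norm (relaxed n - f) + norm (eps n) \<le> 2 * C + suminf (\<lambda>n. norm (eps n))"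
      using relaxed_dist_le[OF fixpoint, of n] C[of n] by linarith
    then show ?thesis by (simp add: mult_right_mono)
  qed
  finally show ?thesis using relaxed_dist_sq[OF fixpoint, of n] by linarith
qed

lemma residual_sq_summable: "summable (\<lambda>n. mu n * (1 - mu n) * (residual n)\<^sup>2)"
proof -
  obtain C where C: "\<And>n. norm (z n - f) \<le> C" using dist_fixpoint_bounded by blast
  define c where "c n = (2 * C + suminf (\<lambda>n. norm (eps n))) * norm (eps n)" for n
  have "summable c" unfolding c_def using eps_summable by (rule summable_mult)
  have "0 \<le> 2 * C + suminf (\<lambda>n. norm (eps n))"
    using C[of 0] norm_ge_zero[of "z 0 - f"] suminf_nonneg[OF eps_summable norm_ge_zero] by linarith
  show ?thesis
  proof (rule summableI_nonneg_bounded[where x = "(norm (z 0 - f))\<^sup>2 + suminf c"])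
    show "0 \<le> mu n * (1 - mu n) * (residual n)\<^sup>2" for n using mu_range[of n] by simp
    fix n
    have "(\<Sum>i<n. mu i * (1 - mu i) * (residual i)\<^sup>2)
        \<le> (\<Sum>i<n. (norm (z i - f))\<^sup>2 - (norm (z (Suc i) - f))\<^sup>2 + c i)"
      using residual_sq_le_dist_decrease[OF C] unfolding c_def by (intro sum_mono) auto
    also have "\<dots> = (norm (z 0 - f))\<^sup>2 - (norm (z n - f))\<^sup>2 + (\<Sum>i<n. c i)"
      using sum_lessThan_telescope'[of "\<lambda>i. (norm (z i - f))\<^sup>2" n] by (simp add: sum.distrib)
    also have "\<dots> \<le> (norm (z 0 - f))\<^sup>2 + suminf c"
    proof -
      have "(\<Sum>i<n. c i) \<le> suminf c"
        using sum_le_suminf[OF \<open>summable c\<close>, of "{..<n}"] \<open>0 \<le> 2 * C + _\<close> unfolding c_def by simp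
      then show ?thesis using zero_le_power2[of "norm (z n - f)"] by linarith
    qed
    finally show "(\<Sum>i<n. mu i * (1 - mu i) * (residual i)\<^sup>2) \<le> (norm (z 0 - f))\<^sup>2 + suminf c" .
  qed
qed

lemma residual_Suc_le: "residual (Suc n) \<le> residual n + 2 * norm (eps n)"
proof -
  have "norm (relaxed n - N (relaxed n)) \<le> norm ((1 - mu n) *\<^sub>R (z n - N (z n))) + norm (N (z n) - N (relaxed n))"
    using norm_triangle_ineq[of "(1 - mu n) *\<^sub>R (z n - N (z n))" "N (z n) - N (relaxed n)"]
    unfolding relaxed_def by (simp add: algebra_simps)
  also have "\<dots> \<le> (1 - mu n) * residual n + norm (z n - relaxed n)"
    using nonexpansive[of "z n" "relaxed n"] mu_range[of n] unfolding residual_def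
    by (simp add: norm_minus_commute)
  also have "norm (z n - relaxed n) = mu n * residual n"
    unfolding relaxed_def residual_def using mu_range[of n] by simp
  finally have relaxed: "norm (relaxed n - N (relaxed n)) \<le> residual n" by (simp add: algebra_simps)
  have "residual (Suc n) = norm ((z (Suc n) - relaxed n) + (relaxed n - N (relaxed n))
      + (N (relaxed n) - N (z (Suc n))))"
    unfolding residual_def by (simp add: norm_minus_commute algebra_simps)
  also have "\<dots> \<le> norm (z (Suc n) - relaxed n) + norm (relaxed n - N (relaxed n))
      + norm (N (relaxed n) - N (z (Suc n)))"
    using norm_triangle_ineq[of "z (Suc n) - relaxed n" "relaxed n - N (relaxed n)"]
      norm_triangle_ineq[of "(z (Suc n) - relaxed n) + (relaxed n - N (relaxed n))"
        "N (relaxed n) - N (z (Suc n))"] by linarith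
  also have "\<dots> \<le> norm (eps n) + residual n + norm (eps n)"
    using relaxed nonexpansive[of "relaxed n" "z (Suc n)"] unfolding z_Suc by (simp add: norm_minus_commute)
  finally show ?thesis by simp
qed

text \<open>The residual converges (quasi-Fej\'er) and \<open>\<Sum> mu n (1 - mu n) = \<infinity>\<close> forces its limit to be 0.\<close>
lemma residual_tendsto_zero: "(\<lambda>n. N (z n) - z n) \<longlonglongrightarrow> 0"
proof -
  have "convergent residual"
    by (rule quasi_fejer_convergent[where c = "\<lambda>n. 2 * norm (eps n)"])
      (use residual_Suc_le summable_mult[OF eps_summable, of 2] in \<open>auto simp: residual_def\<close>)
  then obtain \<delta> where \<delta>: "residual \<longlonglongrightarrow> \<delta>" unfolding convergent_def by blast
  have "\<delta> = 0"
  proof (rule ccontr)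
    have "0 \<le> \<delta>" by (rule LIMSEQ_le_const[OF \<delta>]) (auto simp: residual_def)
    moreover assume "\<delta> \<noteq> 0"
    ultimately have "0 < \<delta>" by simp
    have "\<forall>\<^sub>F n in sequentially. \<delta> / 2 < residual n"
      using order_tendstoD(1)[OF \<delta>, of "\<delta> / 2"] \<open>0 < \<delta>\<close> by simp
    then have "\<forall>\<^sub>F n in sequentially. norm (mu n * (1 - mu n)) \<le> (4 / \<delta>\<^sup>2) * (mu n * (1 - mu n) * (residual n)\<^sup>2)"
    proof (rule eventually_mono)
      fix n assume "\<delta> / 2 < residual n"
      then have "(\<delta> / 2)\<^sup>2 \<le> (residual n)\<^sup>2" using \<open>0 < \<delta>\<close> by (intro power_mono) auto
      then have "1 \<le> (4 / \<delta>\<^sup>2) * (residual n)\<^sup>2" using \<open>0 < \<delta>\<close> by (simp add: field_simps power2_eq_square)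
      moreover have k: "0 \<le> mu n * (1 - mu n)" using mu_range[of n] by simp
      ultimately have "mu n * (1 - mu n) * 1 \<le> mu n * (1 - mu n) * ((4 / \<delta>\<^sup>2) * (residual n)\<^sup>2)"
        by (rule mult_left_mono)
      then show "norm (mu n * (1 - mu n)) \<le> (4 / \<delta>\<^sup>2) * (mu n * (1 - mu n) * (residual n)\<^sup>2)"
        by (simp only: real_norm_def abs_of_nonneg[OF k] mult_1_right mult_ac)
    qed
    then have "summable (\<lambda>n. mu n * (1 - mu n))"
      by (rule summable_comparison_test_ev) (intro summable_mult residual_sq_summable)
    then show False using mu_not_summable by contradiction
  qed
  then show ?thesis using \<delta> tendsto_norm_zero_iff unfolding residual_def by blast
qed

lemma z_bounded: obtains C where "\<And>n. norm (z n) \<le> C"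
proof -
  obtain C where C: "\<And>n. norm (z n - f) \<le> C" using dist_fixpoint_bounded by blast
  have "norm (z n) \<le> C + norm f" for n using norm_triangle_ineq2[of "z n" f] C[of n] by linarith
  then show thesis using that by blast
qed

lemma weakly_convergent_to_fixpoint: "\<exists>w. N w = w \<and> z \<rightharpoonup> w"
proof -
  obtain C where C: "\<And>n. norm (z n) \<le> C" using z_bounded by blast
  show ?thesis
  proof (rule opial_weak_convergence[OF C dist_fixpoint_convergent])
    fix r w assume "strict_mono r" "(z \<circ> r) \<rightharpoonup> w"
    show "N w = w"
    proof (rule nonexpansive_demiclosed[OF nonexpansive \<open>(z \<circ> r) \<rightharpoonup> w\<close>])
      show "(\<lambda>j. N ((z \<circ> r) j) - (z \<circ> r) j) \<longlonglongrightarrow> 0"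
        using LIMSEQ_subseq_LIMSEQ[OF residual_tendsto_zero \<open>strict_mono r\<close>] by (simp add: o_def)
      show "norm ((z \<circ> r) j) \<le> C" for j using C by simp
    qed
  qed
qed

end

section \<open>The primal-dual splitting\<close>

lemma weak_conv_adjoint_map:
  assumes adjoint: "\<And>z c. inner (T z) c = inner z (T' c)" and "X \<rightharpoonup> x"
  shows "(\<lambda>n. T (X n)) \<rightharpoonup> T x"
  using assms unfolding weak_conv_def by simp

locale primal_dual =
  fixes A :: "'h::{real_inner,complete_space} \<Rightarrow> 'h set"
    and B :: "'g::{real_inner,complete_space} \<Rightarrow> 'g set"
    and L :: "'h \<Rightarrow> 'g" and Ls :: "'g \<Rightarrow> 'h"
  assumes A_mm: "maximal_monotone A"
    and B_mm: "maximal_monotone B"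
    and L_bounded_linear: "bounded_linear L"
    and adjoint: "\<And>z g. inner (L z) g = inner z (Ls g)"
begin

sublocale L: bounded_linear L by (rule L_bounded_linear)

lemma Ls_linear: "linear Ls"
proof -
  have eq: "a = b" if "\<And>z. inner z a = inner z b" for a b :: 'h
  proof -
    have "inner (a - b) (a - b) = 0" using that[of "a - b"] by (simp add: inner_diff_right)
    then show ?thesis by simp
  qed
  show ?thesis
    by (intro linearI; rule eq) (simp_all add: adjoint[symmetric] inner_add_right)
qed

sublocale Ls: linear Ls by (rule Ls_linear)

definition Q :: "'h \<Rightarrow> 'h" where "Q = inv_id_plus (Ls \<circ> L)"
definition R :: "'g \<Rightarrow> 'g" where "R = inv_id_plus (L \<circ> Ls)"

lemma Q_eq: "Q y + Ls (L (Q y)) = y"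
  using inv_id_plus_eq[OF linear_compose[OF L.linear_axioms Ls_linear]] adjoint[symmetric]
  unfolding Q_def by simp

lemma Q_eqI: "x + Ls (L x) = y \<Longrightarrow> Q y = x"
  using inv_id_plus_eqI[OF linear_compose[OF L.linear_axioms Ls_linear], of x y] adjoint[symmetric]
  unfolding Q_def by simp

lemma R_eq: "R y + L (Ls (R y)) = y"
  using inv_id_plus_eq[OF linear_compose[OF Ls_linear L.linear_axioms]] adjoint inner_commute
  unfolding R_def by (metis comp_apply inner_ge_zero)

text \<open>The graph \<open>V\<close> of \<open>L\<close> in \<open>\<H> \<times> \<G>\<close> and its orthogonal complement.\<close>
definition in_V :: "'h \<times> 'g \<Rightarrow> bool" where "in_V z \<longleftrightarrow> snd z = L (fst z)"
definition in_Vperp :: "'h \<times> 'g \<Rightarrow> bool" where "in_Vperp z \<longleftrightarrow> fst z = - Ls (snd z)"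

definition proj_V :: "'h \<times> 'g \<Rightarrow> 'h \<times> 'g" where
  "proj_V z = (Q (fst z + Ls (snd z)), L (Q (fst z + Ls (snd z))))"

lemma proj_V_in_V: "in_V (proj_V z)"
  unfolding in_V_def proj_V_def by simp

lemma proj_V_complement: "in_Vperp (z - proj_V z)"
  using Q_eq[of "fst z + Ls (snd z)"] unfolding in_Vperp_def proj_V_def
  by (simp add: Ls.diff algebra_simps)

lemma proj_V_eqI:
  assumes "in_V a" "in_Vperp b" "z = a + b"
  shows "proj_V z = a"
proof -
  obtain x v where a: "a = (x, L x)" and b: "b = (- Ls v, v)"
    using assms(1,2) unfolding in_V_def in_Vperp_def by (metis prod.collapse)
  have "Q (fst z + Ls (snd z)) = x" using assms(3) a b by (intro Q_eqI) (simp add: Ls.add)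
  then show ?thesis unfolding proj_V_def a by simp
qed

lemma in_V_add: "in_V a \<Longrightarrow> in_V b \<Longrightarrow> in_V (a + b)"
  and in_V_diff: "in_V a \<Longrightarrow> in_V b \<Longrightarrow> in_V (a - b)"
  and in_V_scale: "in_V a \<Longrightarrow> in_V (c *\<^sub>R a)"
  unfolding in_V_def by (simp_all add: L.add L.diff L.scaleR)

lemma in_Vperp_add: "in_Vperp a \<Longrightarrow> in_Vperp b \<Longrightarrow> in_Vperp (a + b)"
  and in_Vperp_diff: "in_Vperp a \<Longrightarrow> in_Vperp b \<Longrightarrow> in_Vperp (a - b)"
  and in_Vperp_scale: "in_Vperp a \<Longrightarrow> in_Vperp (c *\<^sub>R a)"
  and in_Vperp_zero: "in_Vperp 0"
  unfolding in_Vperp_def by (simp_all add: Ls.add Ls.diff Ls.scale)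

lemma proj_V_add: "proj_V (a + b) = proj_V a + proj_V b"
  by (rule proj_V_eqI[OF in_V_add[OF proj_V_in_V proj_V_in_V]
        in_Vperp_add[OF proj_V_complement proj_V_complement, of a b]]) simp

lemma proj_V_diff: "proj_V (a - b) = proj_V a - proj_V b"
  by (rule proj_V_eqI[OF in_V_diff[OF proj_V_in_V proj_V_in_V]
        in_Vperp_diff[OF proj_V_complement proj_V_complement, of a b]]) simp

lemma proj_V_scale: "proj_V (c *\<^sub>R a) = c *\<^sub>R proj_V a"
  by (rule proj_V_eqI[OF in_V_scale[OF proj_V_in_V] in_Vperp_scale[OF proj_V_complement]])
    (simp add: algebra_simps)

lemma proj_V_idem: "in_V a \<Longrightarrow> proj_V a = a"
  by (rule proj_V_eqI[OF _ in_Vperp_zero]) simp_all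

lemma in_V_Vperp_orthogonal: "in_V a \<Longrightarrow> in_Vperp b \<Longrightarrow> inner a b = 0"
  unfolding in_V_def in_Vperp_def inner_prod_def by (simp add: adjoint)

lemma norm_sq_V_Vperp: "in_V a \<Longrightarrow> in_Vperp b \<Longrightarrow> (norm (a + b))\<^sup>2 = (norm a)\<^sup>2 + (norm b)\<^sup>2"
  unfolding power2_norm_eq_inner using in_V_Vperp_orthogonal[of a b]
  by (simp add: inner_add_left inner_add_right inner_commute)

lemma proj_V_self_adjoint: "inner (proj_V z) c = inner z (proj_V c)"
proof -
  have "inner (proj_V z) c = inner (proj_V z) (proj_V c)"
    using in_V_Vperp_orthogonal[OF proj_V_in_V proj_V_complement, of z c] by (simp add: inner_diff_right)
  also have "\<dots> = inner z (proj_V c)"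
    using in_V_Vperp_orthogonal[OF proj_V_in_V proj_V_complement, of c z]
    by (simp add: inner_diff_right inner_commute)
  finally show ?thesis .
qed


definition refl_V :: "'h \<times> 'g \<Rightarrow> 'h \<times> 'g" where "refl_V z = 2 *\<^sub>R proj_V z - z"

definition resolvent_AB :: "'h \<times> 'g \<Rightarrow> 'h \<times> 'g" where
  "resolvent_AB z = (resolvent A (fst z), resolvent B (snd z))"

definition dr_map :: "'h \<times> 'g \<Rightarrow> 'h \<times> 'g" where
  "dr_map z = refl_V (2 *\<^sub>R resolvent_AB z - z)"

lemma norm_refl_V: "norm (refl_V z) = norm z"
proof -
  have "refl_V z = proj_V z + - (z - proj_V z)" unfolding refl_V_def by (simp add: algebra_simps scaleR_2)
  then have "(norm (refl_V z))\<^sup>2 = (norm (proj_V z))\<^sup>2 + (norm (z - proj_V z))\<^sup>2"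
    using norm_sq_V_Vperp[OF proj_V_in_V in_Vperp_scale[OF proj_V_complement, where c = "-1"]]
    by (simp add: norm_minus_commute)
  also have "\<dots> = (norm z)\<^sup>2"
    using norm_sq_V_Vperp[OF proj_V_in_V proj_V_complement, of z z] by simp
  finally show ?thesis by (simp add: power2_eq_iff_nonneg)
qed

lemma refl_V_diff: "refl_V a - refl_V b = refl_V (a - b)"
  unfolding refl_V_def by (simp add: proj_V_diff algebra_simps)

lemma resolvent_AB_firmly_nonexpansive:
  "(norm (resolvent_AB a - resolvent_AB b))\<^sup>2 \<le> inner (resolvent_AB a - resolvent_AB b) (a - b)"
  using add_mono[OF resolvent_firmly_nonexpansive[OF A_mm] resolvent_firmly_nonexpansive[OF B_mm]]
  unfolding resolvent_AB_def power2_norm_eq_inner inner_prod_def by simp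

lemma dr_map_minus:
  "dr_map z - z = 2 *\<^sub>R (2 *\<^sub>R proj_V (resolvent_AB z) - proj_V z - resolvent_AB z)"
  unfolding dr_map_def refl_V_def by (simp add: proj_V_add proj_V_diff algebra_simps scaleR_2)

lemma dr_map_nonexpansive: "norm (dr_map a - dr_map b) \<le> norm (a - b)"
proof -
  define d where "d = resolvent_AB a - resolvent_AB b"
  have "dr_map a - dr_map b = refl_V (2 *\<^sub>R d - (a - b))"
    unfolding dr_map_def refl_V_diff d_def by (simp add: algebra_simps)
  then have "norm (dr_map a - dr_map b) = norm (2 *\<^sub>R d - (a - b))" by (simp add: norm_refl_V)
  moreover have "(norm (2 *\<^sub>R d - (a - b)))\<^sup>2 = 4 * (norm d)\<^sup>2 - 4 * inner d (a - b) + (norm (a - b))\<^sup>2"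
    unfolding power2_norm_eq_inner by (simp add: inner_diff_left inner_diff_right inner_commute)
  moreover have "(norm d)\<^sup>2 \<le> inner d (a - b)" unfolding d_def by (rule resolvent_AB_firmly_nonexpansive)
  ultimately have "(norm (dr_map a - dr_map b))\<^sup>2 \<le> (norm (a - b))\<^sup>2" by simp
  then show ?thesis by (rule power2_le_imp_le) simp
qed

text \<open>A primal solution \<open>x\<close> with \<open>-L\<^sup>*v \<in> A x\<close>, \<open>v \<in> B(L x)\<close> yields the fixed point
  \<open>(x - L\<^sup>*v, L x + v)\<close>.\<close>
lemma dr_map_fixpoint_exists:
  assumes "zer (op_add A (\<lambda>z. Ls ` B (L z))) \<noteq> {}"
  obtains f where "dr_map f = f"
proof -
  obtain x a v where "0 = a + Ls v" "a \<in> A x" "v \<in> B (L x)"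
    using assms unfolding zer_def op_add_def by blast
  then have "a = - Ls v" by (simp add: eq_neg_iff_add_eq_0)
  define f where "f = (x + a, L x + v)"
  have J: "resolvent_AB f = (x, L x)"
    using resolvent_eqI[OF A_mm, of "x + a" x] resolvent_eqI[OF B_mm, of "L x + v" "L x"]
      \<open>a \<in> A x\<close> \<open>v \<in> B (L x)\<close> unfolding resolvent_AB_def f_def by simp
  have "proj_V (2 *\<^sub>R resolvent_AB f - f) = (x, L x)"
  proof (rule proj_V_eqI)
    show "in_V (x, L x)" unfolding in_V_def by simp
    show "in_Vperp (Ls v, - v)" unfolding in_Vperp_def by (simp add: Ls.neg)
    show "2 *\<^sub>R resolvent_AB f - f = (x, L x) + (Ls v, - v)"
      unfolding J by (simp add: f_def \<open>a = - Ls v\<close> scaleR_2 algebra_simps)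
  qed
  then have "dr_map f = f" unfolding dr_map_def refl_V_def J by (simp add: scaleR_2 algebra_simps f_def)
  then show thesis by (rule that)
qed

lemma dr_map_fixpoint_proj_V:
  assumes "dr_map f = f"
  shows "proj_V f = resolvent_AB f"
proof -
  define J where "J = resolvent_AB f"
  have "2 *\<^sub>R (proj_V (2 *\<^sub>R J - f) - J) = 0"
    using assms unfolding dr_map_def refl_V_def J_def[symmetric] by (simp add: algebra_simps scaleR_2)
  then have J: "proj_V (2 *\<^sub>R J - f) = J" by simp
  then have "in_V J" using proj_V_in_V by metis
  then have "proj_V (2 *\<^sub>R J - f) = 2 *\<^sub>R J - proj_V f" by (simp add: proj_V_diff proj_V_scale proj_V_idem)
  then show ?thesis using J unfolding J_def by (simp add: algebra_simps scaleR_2)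
qed

lemma dr_map_fixpoint_solution:
  assumes "dr_map f = f"
  shows "- Ls (snd (f - proj_V f)) \<in> A (fst (proj_V f))" and "snd (f - proj_V f) \<in> B (L (fst (proj_V f)))"
proof -
  note fix_eq = dr_map_fixpoint_proj_V[OF assms]
  have "fst (f - proj_V f) = - Ls (snd (f - proj_V f))"
    using proj_V_complement[of f] unfolding in_Vperp_def .
  then show "- Ls (snd (f - proj_V f)) \<in> A (fst (proj_V f))"
    using resolvent_mem[OF A_mm, of "fst f"] unfolding fix_eq resolvent_AB_def by simp
  have "snd (proj_V f) = L (fst (proj_V f))" using proj_V_in_V unfolding in_V_def by blast
  then show "snd (f - proj_V f) \<in> B (L (fst (proj_V f)))"
    using resolvent_mem[OF B_mm, of "snd f"] unfolding fix_eq resolvent_AB_def by simp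
qed

end

locale primal_dual_iteration = primal_dual A B L Ls
  for A :: "'h::{real_inner,complete_space} \<Rightarrow> 'h set"
    and B :: "'g::{real_inner,complete_space} \<Rightarrow> 'g set"
    and L :: "'h \<Rightarrow> 'g" and Ls :: "'g \<Rightarrow> 'h" +
  fixes lam :: "nat \<Rightarrow> real" and a :: "nat \<Rightarrow> 'h" and b :: "nat \<Rightarrow> 'g"
    and x u p r :: "nat \<Rightarrow> 'h" and y v q s t w :: "nat \<Rightarrow> 'g"
  assumes solvable: "zer (op_add A (\<lambda>z. Ls ` B (L z))) \<noteq> {}"
    and lam_range: "\<And>n. 0 < lam n \<and> lam n < 2"
    and lam_not_summable: "\<not> summable (\<lambda>n. lam n * (2 - lam n))"
    and errors_summable: "summable (\<lambda>n. lam n * sqrt ((norm (a n))\<^sup>2 + (norm (b n))\<^sup>2))"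
    and init: "y 0 = L (x 0)" "u 0 = - Ls (v 0)"
    and p_eq: "\<And>n. p n = resolvent A (x n + u n) + a n"
    and q_eq: "\<And>n. q n = resolvent B (y n + v n) + b n"
    and r_eq: "\<And>n. r n = x n + u n - p n"
    and s_eq: "\<And>n. s n = y n + v n - q n"
    and t_eq: "\<And>n. t n = R (L (r n) - s n)"
    and w_eq: "\<And>n. w n = R (L (p n) - q n)"
    and x_Suc: "\<And>n. x (Suc n) = x n + lam n *\<^sub>R (Ls (t n) - r n)"
    and y_Suc: "\<And>n. y (Suc n) = y n - lam n *\<^sub>R (t n + s n)"
    and u_Suc: "\<And>n. u (Suc n) = u n - lam n *\<^sub>R Ls (w n)"
    and v_Suc: "\<And>n. v (Suc n) = v n + lam n *\<^sub>R w n"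
begin

definition z :: "nat \<Rightarrow> 'h \<times> 'g" where "z n = (x n + u n, y n + v n)"
definition e :: "nat \<Rightarrow> 'h \<times> 'g" where "e n = (a n, b n)"

lemma proj_V_rs: "proj_V (r n, s n) = (r n - Ls (t n), s n + t n)"
proof (rule proj_V_eqI)
  show "in_V (r n - Ls (t n), s n + t n)"
    using R_eq[of "L (r n) - s n"] unfolding in_V_def t_eq[symmetric] by (simp add: L.diff algebra_simps)
  show "in_Vperp (Ls (t n), - t n)" unfolding in_Vperp_def by (simp add: Ls.neg)
qed simp

lemma proj_V_pq: "proj_V (p n, q n) = (p n - Ls (w n), q n + w n)"
proof (rule proj_V_eqI)
  show "in_V (p n - Ls (w n), q n + w n)"
    using R_eq[of "L (p n) - q n"] unfolding in_V_def w_eq[symmetric] by (simp add: L.diff algebra_simps)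
  show "in_Vperp (Ls (w n), - w n)" unfolding in_Vperp_def by (simp add: Ls.neg)
qed simp

lemma in_V_xy_in_Vperp_uv: "in_V (x n, y n) \<and> in_Vperp (u n, v n)"
proof (induction n)
  case 0
  show ?case unfolding in_V_def in_Vperp_def using init by simp
next
  case (Suc n)
  have "(x (Suc n), y (Suc n)) = (x n, y n) - lam n *\<^sub>R proj_V (r n, s n)"
    unfolding proj_V_rs x_Suc y_Suc by (simp add: algebra_simps)
  moreover have "(u (Suc n), v (Suc n)) = (u n, v n) - lam n *\<^sub>R ((p n, q n) - proj_V (p n, q n))"
    unfolding proj_V_pq u_Suc v_Suc by (simp add: algebra_simps)
  ultimately show ?case
    using in_V_diff[OF Suc[THEN conjunct1] in_V_scale[OF proj_V_in_V]]
      in_Vperp_diff[OF Suc[THEN conjunct2] in_Vperp_scale[OF proj_V_complement]] by simp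
qed

lemma proj_V_z: "proj_V (z n) = (x n, y n)"
  by (rule proj_V_eqI[OF in_V_xy_in_Vperp_uv[THEN conjunct1] in_V_xy_in_Vperp_uv[THEN conjunct2]])
    (simp add: z_def)

lemma pq_eq: "(p n, q n) = resolvent_AB (z n) + e n"
  unfolding resolvent_AB_def z_def e_def by (simp add: p_eq q_eq)

lemma z_Suc: "z (Suc n) = z n + (lam n / 2) *\<^sub>R (dr_map (z n) - z n) + lam n *\<^sub>R refl_V (e n)"
proof -
  define J where "J = resolvent_AB (z n)"
  have "(r n, s n) = z n - (J + e n)" unfolding J_def pq_eq[symmetric] by (simp add: z_def r_eq s_eq)
  then have rs: "proj_V (r n, s n) = (x n, y n) - proj_V J - proj_V (e n)"
    by (simp add: proj_V_add proj_V_diff proj_V_z)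
  have pq: "(p n, q n) - proj_V (p n, q n) = J + e n - proj_V J - proj_V (e n)"
    unfolding pq_eq J_def by (simp add: proj_V_add)
  have "z (Suc n) = z n - lam n *\<^sub>R (proj_V (r n, s n) + ((p n, q n) - proj_V (p n, q n)))"
    unfolding z_def proj_V_rs proj_V_pq x_Suc y_Suc u_Suc v_Suc by (simp add: algebra_simps)
  also have "\<dots> = z n + lam n *\<^sub>R (2 *\<^sub>R proj_V J - (x n, y n) - J)
      + lam n *\<^sub>R (2 *\<^sub>R proj_V (e n) - e n)"
    unfolding rs pq by (simp add: algebra_simps scaleR_2)
  also have "\<dots> = z n + (lam n / 2) *\<^sub>R (dr_map (z n) - z n) + lam n *\<^sub>R refl_V (e n)"
    unfolding dr_map_minus proj_V_z refl_V_def J_def by simp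
  finally show ?thesis .
qed

lemma z_krasnoselskii_mann:
  obtains f where "krasnoselskii_mann dr_map z (\<lambda>n. lam n *\<^sub>R refl_V (e n)) (\<lambda>n. lam n / 2) f"
proof -
  obtain f where "dr_map f = f" using dr_map_fixpoint_exists[OF solvable] by blast
  have "(\<lambda>n. lam n * (2 - lam n)) = (\<lambda>n. 4 * (lam n / 2 * (1 - lam n / 2)))"
    by (simp add: algebra_simps)
  then have "\<not> summable (\<lambda>n. lam n / 2 * (1 - lam n / 2))"
    using lam_not_summable summable_mult[of _ 4] by metis
  moreover have "norm (lam n *\<^sub>R refl_V (e n)) = lam n * sqrt ((norm (a n))\<^sup>2 + (norm (b n))\<^sup>2)" for n
    using lam_range[of n] by (simp add: norm_refl_V e_def norm_Pair)
  ultimately have "krasnoselskii_mann dr_map z (\<lambda>n. lam n *\<^sub>R refl_V (e n)) (\<lambda>n. lam n / 2) f"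
    using dr_map_nonexpansive \<open>dr_map f = f\<close> z_Suc lam_range errors_summable
    by unfold_locales auto
  then show thesis by (rule that)
qed

lemma dr_residual_tendsto_zero: "(\<lambda>n. dr_map (z n) - z n) \<longlonglongrightarrow> 0"
  using z_krasnoselskii_mann krasnoselskii_mann.residual_tendsto_zero by metis

lemma z_weakly_convergent: obtains f where "dr_map f = f" "z \<rightharpoonup> f"
  using z_krasnoselskii_mann krasnoselskii_mann.weakly_convergent_to_fixpoint by metis

lemma resolvent_components_tendsto_zero:
  shows "(\<lambda>n. proj_V (resolvent_AB (z n) - z n)) \<longlonglongrightarrow> 0"
    and "(\<lambda>n. resolvent_AB (z n) - proj_V (resolvent_AB (z n))) \<longlonglongrightarrow> 0"
proof -
  define \<alpha> where "\<alpha> n = proj_V (resolvent_AB (z n) - z n)" for n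
  define \<beta> where "\<beta> n = resolvent_AB (z n) - proj_V (resolvent_AB (z n))" for n
  have half: "(1/2) *\<^sub>R (2 *\<^sub>R X) = X" for X :: "'h \<times> 'g" by simp
  have "\<alpha> n - \<beta> n = (1/2) *\<^sub>R (dr_map (z n) - z n)" for n
    unfolding \<alpha>_def \<beta>_def dr_map_minus half by (simp add: proj_V_diff algebra_simps scaleR_2)
  then have diff: "(\<lambda>n. \<alpha> n - \<beta> n) \<longlonglongrightarrow> 0"
    using tendsto_scaleR[OF tendsto_const dr_residual_tendsto_zero, of "1/2"] by simp
  have "(norm (\<alpha> n + (-1) *\<^sub>R \<beta> n))\<^sup>2 = (norm (\<alpha> n))\<^sup>2 + (norm ((-1) *\<^sub>R \<beta> n))\<^sup>2" for n
    unfolding \<alpha>_def \<beta>_def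
    by (rule norm_sq_V_Vperp[OF proj_V_in_V in_Vperp_scale[OF proj_V_complement]])
  then have "(norm (\<alpha> n))\<^sup>2 \<le> (norm (\<alpha> n - \<beta> n))\<^sup>2" for n by simp
  then have "norm (\<alpha> n) \<le> norm (\<alpha> n - \<beta> n)" for n by (rule power2_le_imp_le) simp
  then have "\<alpha> \<longlonglongrightarrow> 0"
    by (intro Lim_null_comparison[OF always_eventually tendsto_norm_zero[OF diff]]) simp
  moreover from tendsto_diff[OF this diff] have "\<beta> \<longlonglongrightarrow> 0" by simp
  ultimately show "(\<lambda>n. proj_V (resolvent_AB (z n) - z n)) \<longlonglongrightarrow> 0"
    and "(\<lambda>n. resolvent_AB (z n) - proj_V (resolvent_AB (z n))) \<longlonglongrightarrow> 0"
    unfolding \<alpha>_def \<beta>_def by simp_all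
qed

lemma primal_asymptotics:
  "(\<lambda>n. x n - Q (p n + Ls (q n)) + Q (a n + Ls (b n))) \<longlonglongrightarrow> 0"
  "(\<lambda>n. y n - L (Q (p n + Ls (q n))) + L (Q (a n + Ls (b n)))) \<longlonglongrightarrow> 0"
proof -
  have eq: "(x n - Q (p n + Ls (q n)) + Q (a n + Ls (b n)), y n - L (Q (p n + Ls (q n))) + L (Q (a n + Ls (b n))))
      = - proj_V (resolvent_AB (z n) - z n)" for n
  proof -
    have "(x n - Q (p n + Ls (q n)) + Q (a n + Ls (b n)), y n - L (Q (p n + Ls (q n))) + L (Q (a n + Ls (b n))))
        = proj_V (z n) - proj_V (p n, q n) + proj_V (e n)"
      unfolding proj_V_z by (simp add: proj_V_def e_def)
    also have "\<dots> = - proj_V (resolvent_AB (z n) - z n)"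
      unfolding pq_eq by (simp add: proj_V_add proj_V_diff)
    finally show ?thesis .
  qed
  have "(\<lambda>n. - proj_V (resolvent_AB (z n) - z n)) \<longlonglongrightarrow> 0"
    using tendsto_minus[OF resolvent_components_tendsto_zero(1)] by simp
  from tendsto_fst[OF this] tendsto_snd[OF this]
  show "(\<lambda>n. x n - Q (p n + Ls (q n)) + Q (a n + Ls (b n))) \<longlonglongrightarrow> 0"
    "(\<lambda>n. y n - L (Q (p n + Ls (q n))) + L (Q (a n + Ls (b n)))) \<longlonglongrightarrow> 0"
    unfolding eq[symmetric] by simp_all
qed

lemma dual_asymptotics:
  "(\<lambda>n. u n - r n + Q (r n + Ls (s n)) - a n + Q (a n + Ls (b n))) \<longlonglongrightarrow> 0"
  "(\<lambda>n. v n - s n + L (Q (r n + Ls (s n))) - b n + L (Q (a n + Ls (b n)))) \<longlonglongrightarrow> 0"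
proof -
  have eq: "(u n - r n + Q (r n + Ls (s n)) - a n + Q (a n + Ls (b n)),
      v n - s n + L (Q (r n + Ls (s n))) - b n + L (Q (a n + Ls (b n))))
      = resolvent_AB (z n) - proj_V (resolvent_AB (z n))" for n
  proof -
    have "(u n - r n + Q (r n + Ls (s n)) - a n + Q (a n + Ls (b n)),
        v n - s n + L (Q (r n + Ls (s n))) - b n + L (Q (a n + Ls (b n))))
        = (z n - proj_V (z n)) - (r n, s n) + proj_V (r n, s n) - e n + proj_V (e n)"
      unfolding proj_V_z by (simp add: proj_V_def e_def z_def)
    also have "(r n, s n) = z n - (resolvent_AB (z n) + e n)"
      unfolding pq_eq[symmetric] by (simp add: z_def r_eq s_eq)
    finally show ?thesis by (simp add: proj_V_add proj_V_diff)
  qed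
  from tendsto_fst[OF resolvent_components_tendsto_zero(2)] tendsto_snd[OF resolvent_components_tendsto_zero(2)]
  show "(\<lambda>n. u n - r n + Q (r n + Ls (s n)) - a n + Q (a n + Ls (b n))) \<longlonglongrightarrow> 0"
    "(\<lambda>n. v n - s n + L (Q (r n + Ls (s n))) - b n + L (Q (a n + Ls (b n)))) \<longlonglongrightarrow> 0"
    unfolding eq[symmetric] by simp_all
qed

lemma weak_limits_are_solutions:
  obtains xb vb where "- Ls vb \<in> A xb" "vb \<in> B (L xb)" "x \<rightharpoonup> xb" "v \<rightharpoonup> vb"
proof -
  obtain f where "dr_map f = f" "z \<rightharpoonup> f" using z_weakly_convergent by blast
  have "(\<lambda>n. fst (proj_V (z n))) \<rightharpoonup> fst (proj_V f)"
    by (rule weak_conv_adjoint_map[OF _ \<open>z \<rightharpoonup> f\<close>, where T' = "\<lambda>c. proj_V (c, 0)"])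
      (simp add: proj_V_self_adjoint[symmetric] inner_Pair_0)
  moreover have "(\<lambda>n. snd (z n - proj_V (z n))) \<rightharpoonup> snd (f - proj_V f)"
    by (rule weak_conv_adjoint_map[OF _ \<open>z \<rightharpoonup> f\<close>, where T' = "\<lambda>c. (0, c) - proj_V (0, c)"])
      (simp add: proj_V_self_adjoint[symmetric] inner_Pair_0 inner_diff_left inner_diff_right)
  moreover have "(\<lambda>n. fst (proj_V (z n))) = x" "(\<lambda>n. snd (z n - proj_V (z n))) = v"
    unfolding proj_V_z by (simp_all add: z_def)
  ultimately have "x \<rightharpoonup> fst (proj_V f)" "v \<rightharpoonup> snd (f - proj_V f)" by simp_all
  then show thesis using that dr_map_fixpoint_solution[OF \<open>dr_map f = f\<close>] by blast
qed

end

lemma kkt_pair_solves: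
  fixes L :: "'h::ab_group_add \<Rightarrow> 'g::ab_group_add" and Ls :: "'g \<Rightarrow> 'h"
  assumes "- Ls v \<in> A x" "v \<in> B (L x)"
  shows "x \<in> zer (op_add A (\<lambda>z. Ls ` B (L z)))"
    and "v \<in> zer (op_add (\<lambda>g. (\<lambda>z. - L z) ` set_inv A (- Ls g)) (set_inv B))"
proof -
  have "0 = - Ls v + Ls v" "Ls v \<in> Ls ` B (L x)" using assms(2) by simp_all
  then show "x \<in> zer (op_add A (\<lambda>z. Ls ` B (L z)))"
    unfolding zer_def op_add_def using assms(1) by blast
  have "- L x \<in> (\<lambda>z. - L z) ` set_inv A (- Ls v)" "L x \<in> set_inv B v"
    using assms unfolding set_inv_def by auto
  then show "v \<in> zer (op_add (\<lambda>g. (\<lambda>z. - L z) ` set_inv A (- Ls g)) (set_inv B))"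
    unfolding zer_def op_add_def by force
qed

theorem theorem4p1:
  fixes A :: "'h::{real_inner,complete_space} \<Rightarrow> 'h set"
    and B :: "'g::{real_inner,complete_space} \<Rightarrow> 'g set"
    and L :: "'h \<Rightarrow> 'g" and Ls :: "'g \<Rightarrow> 'h"
    and lam :: "nat \<Rightarrow> real"
    and a :: "nat \<Rightarrow> 'h" and b :: "nat \<Rightarrow> 'g"
    and x u p r :: "nat \<Rightarrow> 'h"
    and y v q s t w :: "nat \<Rightarrow> 'g"
    and x0 :: 'h and v0 :: 'g
  assumes A_mm: "maximal_monotone A"
    and B_mm: "maximal_monotone B"
    and L_lin: "bounded_linear L"
    and Ls_adj: "\<forall>z g. inner (L z) g = inner z (Ls g)"
    and zer_ne: "zer (op_add A (\<lambda>z. Ls ` B (L z))) \<noteq> {}"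
    and lam_range: "\<forall>n. 0 < lam n \<and> lam n < 2"
    and lam_div: "\<not> summable (\<lambda>n. lam n * (2 - lam n))"
    and err_sum: "summable (\<lambda>n. lam n * sqrt ((norm (a n))\<^sup>2 + (norm (b n))\<^sup>2))"
    and init: "x 0 = x0" "v 0 = v0" "y 0 = L x0" "u 0 = - Ls v0"
    and p_def: "\<forall>n. p n = resolvent A (x n + u n) + a n"
    and q_def: "\<forall>n. q n = resolvent B (y n + v n) + b n"
    and r_def: "\<forall>n. r n = x n + u n - p n"
    and s_def: "\<forall>n. s n = y n + v n - q n"
    and t_def: "\<forall>n. t n = inv_id_plus (L \<circ> Ls) (L (r n) - s n)"
    and w_def: "\<forall>n. w n = inv_id_plus (L \<circ> Ls) (L (p n) - q n)"
    and x_step: "\<forall>n. x (Suc n) = x n + lam n *\<^sub>R (Ls (t n) - r n)"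
    and y_step: "\<forall>n. y (Suc n) = y n - lam n *\<^sub>R (t n + s n)"
    and u_step: "\<forall>n. u (Suc n) = u n - lam n *\<^sub>R Ls (w n)"
    and v_step: "\<forall>n. v (Suc n) = v n + lam n *\<^sub>R w n"
  shows
    "(let Q = inv_id_plus (Ls \<circ> L);
          tt = (\<lambda>n. Q (r n + Ls (s n)));
          ww = (\<lambda>n. Q (p n + Ls (q n)));
          e = (\<lambda>n. Q (a n + Ls (b n)))
      in ((\<lambda>n. x n - ww n + e n) \<longlonglongrightarrow> 0)
       \<and> ((\<lambda>n. y n - L (ww n) + L (e n)) \<longlonglongrightarrow> 0)
       \<and> ((\<lambda>n. u n - r n + tt n - a n + e n) \<longlonglongrightarrow> 0)
       \<and> ((\<lambda>n. v n - s n + L (tt n) - b n + L (e n)) \<longlonglongrightarrow> 0))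
     \<and> (\<exists>xb vb.
          xb \<in> zer (op_add A (\<lambda>z. Ls ` B (L z)))
        \<and> vb \<in> zer (op_add (\<lambda>g. (\<lambda>z. - L z) ` set_inv A (- Ls g)) (set_inv B))
        \<and> - Ls vb \<in> A xb \<and> vb \<in> B (L xb)
        \<and> x \<rightharpoonup> xb \<and> v \<rightharpoonup> vb)"
proof -
  interpret primal_dual A B L Ls
    by (rule primal_dual.intro[OF A_mm B_mm L_lin]) (use Ls_adj in blast)
  interpret primal_dual_iteration A B L Ls lam a b x u p r y v q s t w
    using zer_ne lam_range lam_div err_sum init p_def q_def r_def s_def t_def w_def
      x_step y_step u_step v_step
    by unfold_locales (simp_all add: R_def)
  obtain xb vb where "- Ls vb \<in> A xb" "vb \<in> B (L xb)" "x \<rightharpoonup> xb" "v \<rightharpoonup> vb"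
    by (rule weak_limits_are_solutions)
  then show ?thesis
    using primal_asymptotics dual_asymptotics kkt_pair_solves[of Ls vb A xb B L]
    unfolding Let_def Q_def[symmetric] by blast
qed

end
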